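(* Let $q:\mathbb{C}^n\to\mathbb{C}$ be a holomorphic polynomial that does not vanish on the closed unit ball $\overline{B_n}$. Then there exist an integer $N$ and a holomorphic polynomial mapping $p:\mathbb{C}^n\to\mathbb{C}^N$ such that (1) $p/q$ is a rational proper holomorphic mapping from $B_n$ to $B_N$, and (2) $p/q$ is reduced to lowest terms (no non-constant polynomial divides both $q$ and all components of $p$).
   Context: $B_k$ denotes the open unit ball in $\mathbb{C}^k$. A holomorphic mapping $f:B_n\to B_N$ is proper if $f^{-1}(K)$ is compact in $B_n$ for every compact $K\subset B_N$. *)

theory Defs
  imports "HOL-Analysis.Analysis"
begin

definition cpoly :: "(complex^'n \<Rightarrow> complex) \<Rightarrow> bool" where
  "cpoly f \<longleftrightarrow> (\<exists>(A :: ('n \<Rightarrow> nat) set) c. finite A \<and>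
      (\<forall>z. f z = (\<Sum>\<alpha>\<in>A. c \<alpha> * (\<Prod>i\<in>UNIV. (z $ i) ^ (\<alpha> i)))))"

text \<open>Divisibility in the polynomial ring C[z_1..z_n] (polynomials over C are determined by
their values, so polynomials are identified with their polynomial functions).\<close>

definition cpoly_dvd :: "(complex^'n \<Rightarrow> complex) \<Rightarrow> (complex^'n \<Rightarrow> complex) \<Rightarrow> bool" where
  "cpoly_dvd d f \<longleftrightarrow> (\<exists>g. cpoly g \<and> (\<forall>z. f z = d z * g z))"

definition cpoly_nonconstant :: "(complex^'n \<Rightarrow> complex) \<Rightarrow> bool" where
  "cpoly_nonconstant d \<longleftrightarrow> (\<exists>z w. d z \<noteq> d w)"

definition holomorphic_Cn :: "(complex^'n \<Rightarrow> complex) \<Rightarrow> (complex^'n) set \<Rightarrow> bool" where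
  "holomorphic_Cn f S \<longleftrightarrow> (\<forall>z\<in>S. \<exists>D. (f has_derivative D) (at z) \<and>
      (\<forall>v. D (\<i> *s v) = \<i> * D v))"

text \<open>The unit ball B_N of C^N, with C^N embedded into nat => complex as the vectors whose
coordinates with index >= N vanish (nat => complex carries the product topology, which
induces the Euclidean topology on this copy of C^N).\<close>

definition ballN :: "nat \<Rightarrow> (nat \<Rightarrow> complex) set" where
  "ballN N = {w. (\<forall>i\<ge>N. w i = 0) \<and> (\<Sum>i<N. (cmod (w i))\<^sup>2) < 1}"

definition proper_ball_map :: "nat \<Rightarrow> (complex^'n \<Rightarrow> (nat \<Rightarrow> complex)) \<Rightarrow> bool" where
  "proper_ball_map N F \<longleftrightarrow>
     (\<forall>K. compact K \<and> K \<subseteq> ballN N \<longrightarrow> compact {z \<in> ball 0 1. F z \<in> K})"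

end

theory Submission
  imports Defs "HOL-Complex_Analysis.Complex_Analysis" "HOL-Library.Function_Algebras"
    "HOL-Computational_Algebra.Fundamental_Theorem_Algebra"
begin

text \<open>It suffices to find polynomials \<open>h_0, ..., h_(N-1)\<close>, with \<open>h_0\<close> a nonzero constant, such
that \<open>\<Sum>|h_i|^2 = |q|^2\<close> on the unit sphere and \<open>\<Sum>|h_i|^2 < |q|^2\<close> in the open ball: then \<open>h/q\<close>
maps the ball into \<open>B_N\<close> and the sphere into the boundary of \<open>B_N\<close>, so it is proper, and no
nonconstant polynomial (which always has a zero) divides the constant \<open>h_0\<close>.

To find \<open>h\<close>, truncate the power series of \<open>1/q\<close> along complex lines through the origin: this
gives a polynomial \<open>r\<close> of degree \<open>K\<close> with \<open>g = 1 - q r\<close> exponentially small in \<open>K\<close> on the sphere.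
For a polynomial \<open>f = \<Sum>c_\<alpha> z^\<alpha>\<close> of degree \<open>D\<close>, the Lagrange identity for the vectors
\<open>(c_\<alpha>/\<surd>m_\<alpha>)\<close> and \<open>(\<surd>m_\<alpha> z^\<alpha>)\<close>, where the \<open>m_\<alpha>\<close> are the multinomial coefficients, reads
\<open>|f|^2 + (a sum of squared moduli of polynomials) = A(f) \<Sum>_(m\<le>D) |z|^(2m)\<close>, and Cauchy estimates
make the weighted coefficient mass \<open>A(g)\<close> so small that \<open>A(g) (D + 1) < 1\<close>. Combining these
identities for \<open>g\<close> and \<open>r\<close> with \<open>|q r|^2 = |1 - g|^2\<close> writes \<open>|q|^2 (1 + |z|^2)/2\<close> as a sum of
squared moduli of polynomials, one of them a nonzero constant, plus a nonnegative combination of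
\<open>D + 1 - \<Sum>_(m\<le>D) |z|^(2m)\<close> and \<open>K + 1 - \<Sum>_(m\<le>K) |z|^(2m)\<close>, which vanishes on the sphere.\<close>

definition cmonomial :: "('n \<Rightarrow> nat) \<Rightarrow> complex^'n \<Rightarrow> complex" where
  "cmonomial \<alpha> z = (\<Prod>i\<in>UNIV. (z $ i) ^ (\<alpha> i))"

definition total_degree :: "('n::finite \<Rightarrow> nat) \<Rightarrow> nat" where
  "total_degree \<alpha> = (\<Sum>i\<in>UNIV. \<alpha> i)"

definition indices_deg_le :: "nat \<Rightarrow> ('n::finite \<Rightarrow> nat) set" where
  "indices_deg_le D = {\<alpha>. total_degree \<alpha> \<le> D}"

definition unit_index :: "'n \<Rightarrow> 'n \<Rightarrow> nat" where
  "unit_index i = (\<lambda>j. if j = i then 1 else 0)"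

definition cpoly_deg_le :: "nat \<Rightarrow> (complex^'n::finite \<Rightarrow> complex) \<Rightarrow> bool" where
  "cpoly_deg_le D f \<longleftrightarrow> (\<exists>c. \<forall>z. f z = (\<Sum>\<alpha>\<in>indices_deg_le D. c \<alpha> * cmonomial \<alpha> z))"

lemma le_total_degree: "\<alpha> i \<le> total_degree \<alpha>"
  unfolding total_degree_def by (rule member_le_sum) auto

lemma indices_deg_le_subset_PiE:
  "(indices_deg_le D :: ('n::finite \<Rightarrow> nat) set) \<subseteq> PiE UNIV (\<lambda>_. {..D})"
  using le_total_degree order_trans by (fastforce simp: indices_deg_le_def)

lemma finite_indices_deg_le [simp]: "finite (indices_deg_le D)"
  by (rule finite_subset[OF indices_deg_le_subset_PiE]) (auto intro: finite_PiE)

lemma finite_total_degree_eq [simp]: "finite {\<alpha>::'n::finite\<Rightarrow>nat. total_degree \<alpha> = m}"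
  using finite_indices_deg_le[of m] by (rule rev_finite_subset) (auto simp: indices_deg_le_def)

lemma card_indices_deg_le: "card (indices_deg_le D :: ('n::finite \<Rightarrow> nat) set) \<le> (D+1) ^ CARD('n)"
proof -
  have "card (indices_deg_le D :: ('n \<Rightarrow> nat) set) \<le> card (PiE (UNIV::'n set) (\<lambda>_. {..D}))"
    by (rule card_mono[OF _ indices_deg_le_subset_PiE]) (auto intro: finite_PiE)
  also have "\<dots> = (D+1) ^ CARD('n)" by (simp add: card_PiE)
  finally show ?thesis .
qed

lemma total_degree_add: "total_degree (\<alpha> + \<beta>) = total_degree \<alpha> + total_degree \<beta>"
  by (simp add: total_degree_def sum.distrib)

lemma unit_index_self [simp]: "unit_index i i = 1"
  by (simp add: unit_index_def)


lemma total_degree_unit_index [simp]: "total_degree (unit_index i :: 'n::finite \<Rightarrow> nat) = 1"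
  by (simp add: total_degree_def unit_index_def)

lemma cmonomial_add: "cmonomial (\<alpha> + \<beta>) z = cmonomial \<alpha> z * cmonomial \<beta> z"
  by (simp add: cmonomial_def power_add prod.distrib)

lemma cmonomial_scale: "cmonomial \<alpha> (c *s z) = c ^ total_degree \<alpha> * cmonomial \<alpha> z"
  by (simp add: cmonomial_def total_degree_def power_mult_distrib prod.distrib power_sum)

lemma cmonomial_unit_index: "cmonomial (unit_index i) z = z $ i"
  by (simp add: cmonomial_def unit_index_def if_distrib prod.If_cases)

lemma norm_cmonomial: "cmod (cmonomial \<alpha> z) = (\<Prod>i\<in>UNIV. cmod (z $ i) ^ \<alpha> i)"
  by (simp add: cmonomial_def prod_norm[symmetric] norm_power)

lemma norm_cmonomial_le_1: "norm (z::complex^'n::finite) \<le> 1 \<Longrightarrow> cmod (cmonomial \<alpha> z) \<le> 1"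
  unfolding norm_cmonomial
  by (intro prod_le_1 conjI power_le_one order_trans[OF Finite_Cartesian_Product.norm_nth_le]) auto

lemma cpoly_deg_leI:
  assumes "\<forall>z. f z = (\<Sum>\<alpha>\<in>A. c \<alpha> * cmonomial \<alpha> z)" "A \<subseteq> indices_deg_le D"
  shows "cpoly_deg_le D f"
proof -
  define c' where "c' \<alpha> = (if \<alpha> \<in> A then c \<alpha> else 0)" for \<alpha>
  have "f z = (\<Sum>\<alpha>\<in>indices_deg_le D. c' \<alpha> * cmonomial \<alpha> z)" for z
    unfolding assms(1)[rule_format]
    by (rule sum.mono_neutral_cong_left[OF _ assms(2)]) (auto simp: c'_def)
  then show ?thesis by (auto simp: cpoly_deg_le_def)
qed

lemma cpoly_deg_le_mono:
  assumes "cpoly_deg_le D f" "D \<le> E"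
  shows "cpoly_deg_le E f"
proof -
  obtain c where "\<forall>z. f z = (\<Sum>\<alpha>\<in>indices_deg_le D. c \<alpha> * cmonomial \<alpha> z)"
    using assms(1) by (auto simp: cpoly_deg_le_def)
  then show ?thesis
    by (rule cpoly_deg_leI) (use assms(2) in \<open>auto simp: indices_deg_le_def\<close>)
qed

lemma cpoly_deg_le_imp_cpoly: "cpoly_deg_le D f \<Longrightarrow> cpoly f"
  unfolding cpoly_deg_le_def cpoly_def cmonomial_def
  by (auto intro!: exI[of _ "indices_deg_le D"])

lemma cpoly_imp_deg_le: assumes "cpoly f" obtains D where "cpoly_deg_le D f"
proof -
  obtain A c where A: "finite A" "\<forall>z. f z = (\<Sum>\<alpha>\<in>A. c \<alpha> * cmonomial \<alpha> z)"
    using assms by (auto simp: cpoly_def cmonomial_def)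
  have "A \<subseteq> indices_deg_le (Max (insert 0 (total_degree ` A)))"
    using A(1) by (auto simp: indices_deg_le_def)
  with A(2) show ?thesis by (intro that cpoly_deg_leI)
qed

lemma cpoly_deg_le_cmonomial: "\<alpha> \<in> indices_deg_le D \<Longrightarrow> cpoly_deg_le D (cmonomial \<alpha>)"
  by (rule cpoly_deg_leI[where A = "{\<alpha>}" and c = "\<lambda>_. 1"]) auto

lemma cpoly_deg_le_const: "cpoly_deg_le D (\<lambda>z. a)"
proof -
  have "cmonomial 0 z = 1" for z by (simp add: cmonomial_def)
  then show ?thesis
    by (intro cpoly_deg_leI[where A = "{0}" and c = "\<lambda>_. a"])
       (auto simp: indices_deg_le_def total_degree_def)
qed

lemma cpoly_deg_le_coord: "cpoly_deg_le 1 (\<lambda>z. z $ i)"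
proof -
  have "unit_index i \<in> indices_deg_le 1" by (simp add: indices_deg_le_def)
  moreover have "cmonomial (unit_index i) = (\<lambda>z. z $ i)" by (simp add: fun_eq_iff cmonomial_unit_index)
  ultimately show ?thesis by (metis cpoly_deg_le_cmonomial)
qed

lemma cpoly_deg_le_add:
  assumes "cpoly_deg_le D f" "cpoly_deg_le D g"
  shows "cpoly_deg_le D (\<lambda>z. f z + g z)"
proof -
  obtain c d where "\<forall>z. f z = (\<Sum>\<alpha>\<in>indices_deg_le D. c \<alpha> * cmonomial \<alpha> z)"
    "\<forall>z. g z = (\<Sum>\<alpha>\<in>indices_deg_le D. d \<alpha> * cmonomial \<alpha> z)"
    using assms by (auto simp: cpoly_deg_le_def)
  then show ?thesis unfolding cpoly_deg_le_def
    by (intro exI[of _ "\<lambda>\<alpha>. c \<alpha> + d \<alpha>"]) (simp add: sum.distrib algebra_simps)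
qed

lemma cpoly_deg_le_cmult: assumes "cpoly_deg_le D f" shows "cpoly_deg_le D (\<lambda>z. a * f z)"
proof -
  obtain c where "\<forall>z. f z = (\<Sum>\<alpha>\<in>indices_deg_le D. c \<alpha> * cmonomial \<alpha> z)"
    using assms by (auto simp: cpoly_deg_le_def)
  then show ?thesis unfolding cpoly_deg_le_def
    by (intro exI[of _ "\<lambda>\<alpha>. a * c \<alpha>"]) (simp add: sum_distrib_left algebra_simps)
qed

lemma cpoly_deg_le_diff:
  assumes "cpoly_deg_le D f" "cpoly_deg_le D g"
  shows "cpoly_deg_le D (\<lambda>z. f z - g z)"
  using cpoly_deg_le_add[OF assms(1) cpoly_deg_le_cmult[OF assms(2), of "-1"]] by simp

lemma cpoly_deg_le_sum:
  "finite I \<Longrightarrow> (\<And>i. i \<in> I \<Longrightarrow> cpoly_deg_le D (f i)) \<Longrightarrow> cpoly_deg_le D (\<lambda>z. \<Sum>i\<in>I. f i z)"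
  by (induction I rule: finite_induct) (auto intro: cpoly_deg_le_add cpoly_deg_le_const)

lemma cpoly_deg_le_mult:
  assumes "cpoly_deg_le D f" "cpoly_deg_le E g"
  shows "cpoly_deg_le (D+E) (\<lambda>z. f z * g z)"
proof -
  obtain c d where c: "\<forall>z. f z = (\<Sum>\<alpha>\<in>indices_deg_le D. c \<alpha> * cmonomial \<alpha> z)"
    and d: "\<forall>z. g z = (\<Sum>\<alpha>\<in>indices_deg_le E. d \<alpha> * cmonomial \<alpha> z)"
    using assms by (auto simp: cpoly_deg_le_def)
  let ?S = "indices_deg_le D \<times> indices_deg_le E"
  define e where "e \<gamma> = (\<Sum>p\<in>{p. p \<in> ?S \<and> fst p + snd p = \<gamma>}. c (fst p) * d (snd p))" for \<gamma>
  have img: "(\<lambda>p. fst p + snd p) ` ?S \<subseteq> indices_deg_le (D+E)"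
    by (auto simp: indices_deg_le_def total_degree_add)
  have "f z * g z = (\<Sum>\<gamma>\<in>indices_deg_le (D+E). e \<gamma> * cmonomial \<gamma> z)" for z
  proof -
    have "f z * g z = (\<Sum>p\<in>?S. c (fst p) * d (snd p) * cmonomial (fst p + snd p) z)"
      unfolding c[rule_format] d[rule_format] sum_product sum.cartesian_product
      by (intro sum.cong) (auto simp: cmonomial_add)
    also have "\<dots> = (\<Sum>\<gamma>\<in>indices_deg_le (D+E).
        \<Sum>p\<in>{p. p \<in> ?S \<and> fst p + snd p = \<gamma>}. c (fst p) * d (snd p) * cmonomial (fst p + snd p) z)"
      by (rule sum.group[symmetric]) (use img in auto)
    also have "\<dots> = (\<Sum>\<gamma>\<in>indices_deg_le (D+E). e \<gamma> * cmonomial \<gamma> z)"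
      unfolding e_def sum_distrib_right by (intro sum.cong refl) auto
    finally show ?thesis .
  qed
  then show ?thesis by (auto simp: cpoly_deg_le_def)
qed

lemma holomorphic_Cn_const: "holomorphic_Cn (\<lambda>z. a) S"
  unfolding holomorphic_Cn_def by (intro ballI exI[of _ "\<lambda>v. 0"]) auto

lemma holomorphic_Cn_coord: "holomorphic_Cn (\<lambda>z. z $ i) S"
  unfolding holomorphic_Cn_def
  by (intro ballI exI[of _ "\<lambda>v. v $ i"]) (auto intro: bounded_linear_imp_has_derivative)

lemma holomorphic_Cn_add:
  assumes "holomorphic_Cn f S" "holomorphic_Cn g S"
  shows "holomorphic_Cn (\<lambda>z. f z + g z) S"
  unfolding holomorphic_Cn_def
proof
  fix z assume "z \<in> S"
  obtain Df where f: "(f has_derivative Df) (at z)" "\<forall>v. Df (\<i> *s v) = \<i> * Df v"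
    using assms(1) \<open>z \<in> S\<close> unfolding holomorphic_Cn_def by blast
  obtain Dg where g: "(g has_derivative Dg) (at z)" "\<forall>v. Dg (\<i> *s v) = \<i> * Dg v"
    using assms(2) \<open>z \<in> S\<close> unfolding holomorphic_Cn_def by blast
  show "\<exists>D. ((\<lambda>z. f z + g z) has_derivative D) (at z) \<and> (\<forall>v. D (\<i> *s v) = \<i> * D v)"
    by (intro exI[of _ "\<lambda>v. Df v + Dg v"] conjI has_derivative_add f g) (simp add: f g algebra_simps)
qed

lemma holomorphic_Cn_mult:
  assumes "holomorphic_Cn f S" "holomorphic_Cn g S"
  shows "holomorphic_Cn (\<lambda>z. f z * g z) S"
  unfolding holomorphic_Cn_def
proof
  fix z assume "z \<in> S"
  obtain Df where f: "(f has_derivative Df) (at z)" "\<forall>v. Df (\<i> *s v) = \<i> * Df v"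
    using assms(1) \<open>z \<in> S\<close> unfolding holomorphic_Cn_def by blast
  obtain Dg where g: "(g has_derivative Dg) (at z)" "\<forall>v. Dg (\<i> *s v) = \<i> * Dg v"
    using assms(2) \<open>z \<in> S\<close> unfolding holomorphic_Cn_def by blast
  show "\<exists>D. ((\<lambda>z. f z * g z) has_derivative D) (at z) \<and> (\<forall>v. D (\<i> *s v) = \<i> * D v)"
    by (intro exI[of _ "\<lambda>v. f z * Dg v + Df v * g z"] conjI has_derivative_mult f g)
       (simp add: f g algebra_simps)
qed

lemma holomorphic_Cn_inverse:
  assumes "holomorphic_Cn f S" "\<forall>z\<in>S. f z \<noteq> 0"
  shows "holomorphic_Cn (\<lambda>z. inverse (f z)) S"
  unfolding holomorphic_Cn_def
proof
  fix z assume z: "z \<in> S"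
  obtain Df where f: "(f has_derivative Df) (at z)" "\<forall>v. Df (\<i> *s v) = \<i> * Df v"
    using assms(1) z unfolding holomorphic_Cn_def by blast
  have "f z \<noteq> 0" using assms z by blast
  have "((\<lambda>z. inverse (f z)) has_derivative (\<lambda>h. - (inverse (f z) * Df h * inverse (f z)))) (at z)"
    by (rule Deriv.has_derivative_inverse[OF \<open>f z \<noteq> 0\<close> f(1)])
  moreover have "- (inverse (f z) * Df (\<i> *s v) * inverse (f z)) = \<i> * - (inverse (f z) * Df v * inverse (f z))" for v
    by (simp add: f(2))
  ultimately show "\<exists>D. ((\<lambda>z. inverse (f z)) has_derivative D) (at z) \<and> (\<forall>v. D (\<i> *s v) = \<i> * D v)"
    by blast
qed

lemma holomorphic_Cn_sum:
  "finite I \<Longrightarrow> (\<And>i. i \<in> I \<Longrightarrow> holomorphic_Cn (f i) S) \<Longrightarrow> holomorphic_Cn (\<lambda>z. \<Sum>i\<in>I. f i z) S"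
  by (induction I rule: finite_induct) (auto intro: holomorphic_Cn_add holomorphic_Cn_const)

lemma holomorphic_Cn_prod:
  "finite I \<Longrightarrow> (\<And>i. i \<in> I \<Longrightarrow> holomorphic_Cn (f i) S) \<Longrightarrow> holomorphic_Cn (\<lambda>z. \<Prod>i\<in>I. f i z) S"
  by (induction I rule: finite_induct) (auto intro: holomorphic_Cn_mult holomorphic_Cn_const)

lemma holomorphic_Cn_power: "holomorphic_Cn f S \<Longrightarrow> holomorphic_Cn (\<lambda>z. f z ^ k) S"
  by (induction k) (auto intro: holomorphic_Cn_mult holomorphic_Cn_const)

lemma holomorphic_Cn_cpoly: assumes "cpoly f" shows "holomorphic_Cn f S"
proof -
  obtain A c where A: "finite A" "\<forall>z. f z = (\<Sum>\<alpha>\<in>A. c \<alpha> * (\<Prod>i\<in>UNIV. (z $ i) ^ (\<alpha> i)))"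
    using assms by (auto simp: cpoly_def)
  have "holomorphic_Cn (\<lambda>z. \<Sum>\<alpha>\<in>A. c \<alpha> * (\<Prod>i\<in>UNIV. (z $ i) ^ (\<alpha> i))) S"
    by (intro holomorphic_Cn_sum A(1) holomorphic_Cn_mult holomorphic_Cn_const holomorphic_Cn_prod
        holomorphic_Cn_power holomorphic_Cn_coord) auto
  moreover have "f = (\<lambda>z. \<Sum>\<alpha>\<in>A. c \<alpha> * (\<Prod>i\<in>UNIV. (z $ i) ^ (\<alpha> i)))" using A(2) by auto
  ultimately show ?thesis by simp
qed

lemma holomorphic_Cn_divide:
  assumes "cpoly f" "cpoly g" "\<forall>z\<in>S. g z \<noteq> 0"
  shows "holomorphic_Cn (\<lambda>z. f z / g z) S"
  unfolding divide_inverse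
  by (intro holomorphic_Cn_mult holomorphic_Cn_inverse holomorphic_Cn_cpoly assms)

lemma holomorphic_Cn_imp_continuous_on: "holomorphic_Cn f S \<Longrightarrow> continuous_on S f"
  unfolding holomorphic_Cn_def
  by (auto intro!: continuous_at_imp_continuous_on dest: has_derivative_continuous)

lemma cpoly_continuous_on: "cpoly f \<Longrightarrow> continuous_on S f"
  by (intro holomorphic_Cn_imp_continuous_on holomorphic_Cn_cpoly)

lemma cpoly_restrict_line:
  assumes "cpoly f"
  obtains p :: "complex poly" where "\<And>t. f (a + t *s b) = poly p t"
proof -
  obtain A c where A: "\<forall>z. f z = (\<Sum>\<alpha>\<in>A. c \<alpha> * (\<Prod>i\<in>UNIV. (z $ i) ^ (\<alpha> i)))"
    using assms by (auto simp: cpoly_def)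
  define p where "p = (\<Sum>\<alpha>\<in>A. smult (c \<alpha>) (\<Prod>i\<in>UNIV. [:a $ i, b $ i:] ^ (\<alpha> i)))"
  have "f (a + t *s b) = poly p t" for t
    unfolding A[rule_format] p_def poly_sum by (simp add: poly_prod mult.commute)
  then show ?thesis by (rule that)
qed

lemma cpoly_nonconstant_has_zero:
  assumes "cpoly d" "cpoly_nonconstant d"
  obtains z where "d z = 0"
proof -
  obtain z w where zw: "d z \<noteq> d w" using assms(2) by (auto simp: cpoly_nonconstant_def)
  obtain p where p: "\<And>t. d (z + t *s (w - z)) = poly p t"
    using cpoly_restrict_line[OF assms(1)] by blast
  have "poly p 0 \<noteq> poly p 1" using zw p[of 0] p[of 1] by simp
  then have "\<not> constant (poly p)" unfolding constant_def by metis
  then obtain t where "poly p t = 0" using fundamental_theorem_of_algebra by blast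
  then show ?thesis using p that by metis
qed

lemma cpoly_dvd_nonzero_const_imp_constant:
  assumes "cpoly d" "cpoly_dvd d (\<lambda>z. c)" "c \<noteq> 0"
  shows "\<not> cpoly_nonconstant d"
proof
  assume "cpoly_nonconstant d"
  then obtain z where "d z = 0" using cpoly_nonconstant_has_zero assms(1) by blast
  then show False using assms(2,3) by (auto simp: cpoly_dvd_def)
qed

lemma sum_sq_divide_in_ballN:
  assumes "(\<Sum>i<N. (cmod (h i z))\<^sup>2) < (cmod (q z))\<^sup>2"
  shows "(\<lambda>i. if i < N then h i z / q z else 0) \<in> ballN N"
proof -
  have "(\<Sum>i<N. (cmod (h i z / q z))\<^sup>2) = (\<Sum>i<N. (cmod (h i z))\<^sup>2) / (cmod (q z))\<^sup>2"
    by (simp add: sum_divide_distrib norm_divide power_divide)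
  also have "\<dots> < 1" using assms by (simp add: divide_less_eq)
  finally show ?thesis by (simp add: ballN_def)
qed

lemma sum_sq_divide_notin_ballN:
  assumes "(\<Sum>i<N. (cmod (h i z))\<^sup>2) = (cmod (q z))\<^sup>2" "q z \<noteq> 0"
  shows "(\<lambda>i. if i < N then h i z / q z else 0) \<notin> ballN N"
proof -
  have "(\<Sum>i<N. (cmod (h i z / q z))\<^sup>2) = (\<Sum>i<N. (cmod (h i z))\<^sup>2) / (cmod (q z))\<^sup>2"
    by (simp add: sum_divide_distrib norm_divide power_divide)
  also have "\<dots> = 1" using assms by simp
  finally show ?thesis by (simp add: ballN_def)
qed

lemma proper_ball_mapI:
  assumes "continuous_on (cball 0 1) F" "\<forall>z. norm z = 1 \<longrightarrow> F z \<notin> ballN N"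
  shows "proper_ball_map N F"
  unfolding proper_ball_map_def
proof (intro allI impI)
  fix K assume K: "compact K \<and> K \<subseteq> ballN N"
  then have "{z \<in> ball 0 1. F z \<in> K} = cball 0 1 \<inter> F -` K"
    using assms(2) by (auto simp: less_le)
  moreover have "closed (cball 0 1 \<inter> F -` K)"
    using K by (intro continuous_closed_preimage assms(1) compact_imp_closed) auto
  then have "compact (cball 0 1 \<inter> (cball 0 1 \<inter> F -` K))"
    by (rule compact_Int_closed[OF compact_cball])
  ultimately show "compact {z \<in> ball 0 1. F z \<in> K}" by (simp add: Int_absorb)
qed

section \<open>The Lagrange identity and the multinomial theorem\<close>

lemma lagrange_identity_cmod:
  fixes x y :: "'i \<Rightarrow> complex"
  assumes "finite I"
  shows "(\<Sum>i\<in>I. (cmod (x i))\<^sup>2) * (\<Sum>i\<in>I. (cmod (y i))\<^sup>2) =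
         (cmod (\<Sum>i\<in>I. x i * y i))\<^sup>2 + (1/2) * (\<Sum>i\<in>I. \<Sum>j\<in>I. (cmod (cnj (x i) * y j - cnj (x j) * y i))\<^sup>2)"
proof -
  have *: "complex_of_real ((cmod u)\<^sup>2) = u * cnj u" for u by (rule complex_norm_square)
  define X where "X = (\<Sum>i\<in>I. x i * cnj (x i))"
  define Y where "Y = (\<Sum>i\<in>I. y i * cnj (y i))"
  define P where "P = (\<Sum>i\<in>I. x i * y i)"
  have cP: "cnj P = (\<Sum>i\<in>I. cnj (x i) * cnj (y i))" by (simp add: P_def)
  have trm: "(cnj (x i) * y j - cnj (x j) * y i) * cnj (cnj (x i) * y j - cnj (x j) * y i)
     = ((x i * cnj (x i)) * (y j * cnj (y j)) + (x j * cnj (x j)) * (y i * cnj (y i)))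
          - ((cnj (x i) * cnj (y i)) * (x j * y j) + (x i * y i) * (cnj (x j) * cnj (y j)))" for i j
    by (simp add: algebra_simps)
  have T1: "(\<Sum>i\<in>I. \<Sum>j\<in>I. (x i * cnj (x i)) * (y j * cnj (y j))) = X * Y"
    by (simp add: X_def Y_def sum_product)
  have T2: "(\<Sum>i\<in>I. \<Sum>j\<in>I. (x j * cnj (x j)) * (y i * cnj (y i))) = X * Y"
    unfolding X_def Y_def sum_product by (rule sum.swap)
  have T3: "(\<Sum>i\<in>I. \<Sum>j\<in>I. (cnj (x i) * cnj (y i)) * (x j * y j)) = P * cnj P"
    unfolding cP P_def sum_product by (subst sum.swap) (simp add: mult.commute flip: sum_product)
  have T4: "(\<Sum>i\<in>I. \<Sum>j\<in>I. (x i * y i) * (cnj (x j) * cnj (y j))) = P * cnj P"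
    by (simp add: cP P_def sum_product)
  have eq: "(\<Sum>i\<in>I. \<Sum>j\<in>I. (cnj (x i) * y j - cnj (x j) * y i) * cnj (cnj (x i) * y j - cnj (x j) * y i))
      = 2 * (X * Y) - 2 * (P * cnj P)"
    unfolding trm sum_subtractf sum.distrib T1 T2 T3 T4 by simp
  have "complex_of_real ((\<Sum>i\<in>I. (cmod (x i))\<^sup>2) * (\<Sum>i\<in>I. (cmod (y i))\<^sup>2))
     = complex_of_real ((cmod P)\<^sup>2 + (1/2) * (\<Sum>i\<in>I. \<Sum>j\<in>I. (cmod (cnj (x i) * y j - cnj (x j) * y i))\<^sup>2))"
    unfolding of_real_mult of_real_add of_real_sum * eq
    by (simp add: X_def[symmetric] Y_def[symmetric] field_simps)
  then show ?thesis unfolding P_def of_real_eq_iff .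
qed

definition multinomial_coeff :: "('n::finite \<Rightarrow> nat) \<Rightarrow> real" where
  "multinomial_coeff \<alpha> = fact (total_degree \<alpha>) / (\<Prod>i\<in>UNIV. fact (\<alpha> i))"

lemma multinomial_coeff_pos: "multinomial_coeff \<alpha> > 0"
  by (simp add: multinomial_coeff_def prod_pos)

lemma multinomial_coeff_minus_unit_index:
  assumes "0 < \<beta> i"
  shows "real (total_degree \<beta>) * multinomial_coeff (\<beta> - unit_index i) = real (\<beta> i) * multinomial_coeff \<beta>"
proof -
  define \<gamma> where "\<gamma> = \<beta> - unit_index i"
  have \<beta>: "\<beta> = \<gamma> + unit_index i" using assms by (auto simp: \<gamma>_def fun_eq_iff unit_index_def)
  have "(\<Prod>j\<in>UNIV. fact (\<beta> j) :: real) = (\<Prod>j\<in>UNIV. (if j = i then real (\<beta> i) else 1) * fact (\<gamma> j))"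
    by (intro prod.cong refl) (auto simp: \<beta> unit_index_def)
  also have "\<dots> = real (\<beta> i) * (\<Prod>j\<in>UNIV. fact (\<gamma> j))"
    by (simp add: prod.distrib prod.If_cases)
  finally have "(\<Prod>j\<in>UNIV. fact (\<beta> j) :: real) = real (\<beta> i) * (\<Prod>j\<in>UNIV. fact (\<gamma> j))" .
  moreover have "total_degree \<beta> = Suc (total_degree \<gamma>)" by (simp add: \<beta> total_degree_add)
  ultimately show ?thesis
    using assms by (simp add: multinomial_coeff_def \<gamma>_def[symmetric] field_simps)
qed

lemma sum_multinomial_coeff_minus_unit_index:
  assumes "0 < total_degree \<beta>"
  shows "(\<Sum>i\<in>UNIV. if 0 < \<beta> i then multinomial_coeff (\<beta> - unit_index i) else 0) = multinomial_coeff \<beta>"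
proof -
  have "(\<Sum>i\<in>UNIV. if 0 < \<beta> i then multinomial_coeff (\<beta> - unit_index i) else 0)
      = (\<Sum>i\<in>UNIV. real (\<beta> i) / real (total_degree \<beta>) * multinomial_coeff \<beta>)"
    using multinomial_coeff_minus_unit_index[of \<beta>] assms
    by (intro sum.cong refl) (auto simp: field_simps)
  also have "\<dots> = (\<Sum>i\<in>UNIV. real (\<beta> i)) / real (total_degree \<beta>) * multinomial_coeff \<beta>"
    by (simp add: sum_distrib_right sum_divide_distrib)
  also have "\<dots> = multinomial_coeff \<beta>"
  proof -
    have "(\<Sum>i\<in>UNIV. real (\<beta> i)) = real (total_degree \<beta>)"
      by (simp add: total_degree_def)
    then show ?thesis using assms by simp
  qed
  finally show ?thesis .
qed

lemma multinomial_theorem: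
  fixes x :: "'n::finite \<Rightarrow> real"
  shows "(\<Sum>i\<in>UNIV. x i) ^ m
       = (\<Sum>\<alpha>\<in>{\<alpha>. total_degree \<alpha> = m}. multinomial_coeff \<alpha> * (\<Prod>i\<in>UNIV. x i ^ \<alpha> i))"
proof (induction m)
  case 0
  have "{\<alpha>::'n\<Rightarrow>nat. total_degree \<alpha> = 0} = {0}" by (auto simp: total_degree_def)
  then show ?case by (simp add: multinomial_coeff_def total_degree_def)
next
  case (Suc m)
  let ?S = "{\<alpha>::'n\<Rightarrow>nat. total_degree \<alpha> = m}" and ?T = "{\<alpha>::'n\<Rightarrow>nat. total_degree \<alpha> = Suc m}"
  let ?xp = "\<lambda>\<alpha>. \<Prod>i\<in>UNIV. x i ^ \<alpha> i"
  have xp_add: "(\<Prod>j\<in>UNIV. x j ^ (\<alpha> j + unit_index i j)) = ?xp \<alpha> * x i" for \<alpha> i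
  proof -
    have "(\<Prod>j\<in>UNIV. x j ^ unit_index i j) = (\<Prod>j\<in>UNIV. if j = i then x j else 1)"
      by (intro prod.cong) (auto simp: unit_index_def)
    then show ?thesis by (simp add: power_add prod.distrib)
  qed
  have shift: "(\<Sum>\<alpha>\<in>?S. multinomial_coeff \<alpha> * ?xp (\<alpha> + unit_index i))
      = (\<Sum>\<beta>\<in>?T. (if 0 < \<beta> i then multinomial_coeff (\<beta> - unit_index i) else 0) * ?xp \<beta>)" for i
  proof -
    have "(\<Sum>\<alpha>\<in>?S. multinomial_coeff \<alpha> * ?xp (\<alpha> + unit_index i))
        = (\<Sum>\<beta>\<in>{\<beta>\<in>?T. 0 < \<beta> i}. multinomial_coeff (\<beta> - unit_index i) * ?xp \<beta>)"
    proof (rule sum.reindex_bij_witness[of _ "\<lambda>\<beta>. \<beta> - unit_index i" "\<lambda>\<alpha>. \<alpha> + unit_index i"])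
      fix \<beta> assume "\<beta> \<in> {\<beta>\<in>?T. 0 < \<beta> i}"
      moreover have "\<beta> - unit_index i + unit_index i = \<beta>" if "0 < \<beta> i"
        using that by (auto simp: fun_eq_iff unit_index_def)
      ultimately show "\<beta> - unit_index i + unit_index i = \<beta>" "\<beta> - unit_index i \<in> ?S"
        by (auto simp: total_degree_add dest: arg_cong[where f = total_degree])
    qed (auto simp: total_degree_add)
    also have "\<dots> = (\<Sum>\<beta>\<in>?T. (if 0 < \<beta> i then multinomial_coeff (\<beta> - unit_index i) else 0) * ?xp \<beta>)"
      by (subst sum.inter_filter) (auto intro: sum.cong)
    finally show ?thesis .
  qed
  have "(\<Sum>i\<in>UNIV. x i) ^ Suc m = (\<Sum>i\<in>UNIV. \<Sum>\<alpha>\<in>?S. multinomial_coeff \<alpha> * ?xp (\<alpha> + unit_index i))"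
    by (subst sum.swap) (simp add: Suc.IH xp_add sum_distrib_left sum_distrib_right mult_ac)
  also have "\<dots> = (\<Sum>\<beta>\<in>?T. (\<Sum>i\<in>UNIV. if 0 < \<beta> i then multinomial_coeff (\<beta> - unit_index i) else 0) * ?xp \<beta>)"
    unfolding shift by (subst sum.swap) (simp add: sum_distrib_right)
  also have "\<dots> = (\<Sum>\<beta>\<in>?T. multinomial_coeff \<beta> * ?xp \<beta>)"
    by (intro sum.cong refl) (simp add: sum_multinomial_coeff_minus_unit_index)
  finally show ?case .
qed

lemma norm_vec_power2: "(norm (z::complex^'n::finite))\<^sup>2 = (\<Sum>i\<in>UNIV. (cmod (z $ i))\<^sup>2)"
  unfolding norm_vec_def L2_set_def by (simp add: sum_nonneg)

definition norm_power_sum :: "nat \<Rightarrow> complex^'n::finite \<Rightarrow> real" where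
  "norm_power_sum D z = (\<Sum>m\<le>D. (norm z)^(2*m))"

lemma sum_multinomial_coeff_cmonomial:
  "(\<Sum>\<alpha>\<in>indices_deg_le D. multinomial_coeff \<alpha> * (cmod (cmonomial \<alpha> z))\<^sup>2)
     = norm_power_sum D (z::complex^'n::finite)"
proof -
  have sq: "(cmod (cmonomial \<alpha> z))\<^sup>2 = (\<Prod>i\<in>UNIV. ((cmod (z $ i))\<^sup>2) ^ \<alpha> i)" for \<alpha>
  proof -
    have "(cmod (cmonomial \<alpha> z))\<^sup>2 = (\<Prod>i\<in>UNIV. (cmod (z $ i) ^ \<alpha> i)\<^sup>2)"
      by (simp add: norm_cmonomial prod_power_distrib)
    also have "\<dots> = (\<Prod>i\<in>UNIV. ((cmod (z $ i))\<^sup>2) ^ \<alpha> i)"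
      by (intro prod.cong refl) (simp add: power_mult[symmetric] mult.commute)
    finally show ?thesis .
  qed
  have "(\<Sum>\<alpha>\<in>indices_deg_le D. multinomial_coeff \<alpha> * (cmod (cmonomial \<alpha> z))\<^sup>2)
      = (\<Sum>m\<le>D. \<Sum>\<alpha>\<in>{\<alpha>\<in>indices_deg_le D. total_degree \<alpha> = m}.
            multinomial_coeff \<alpha> * (cmod (cmonomial \<alpha> z))\<^sup>2)"
    by (rule sum.group[symmetric])
       (auto simp: indices_deg_le_def finite_indices_deg_le[unfolded indices_deg_le_def])
  also have "\<dots> = (\<Sum>m\<le>D. \<Sum>\<alpha>\<in>{\<alpha>. total_degree \<alpha> = m}. multinomial_coeff \<alpha> * (cmod (cmonomial \<alpha> z))\<^sup>2)"
    by (intro sum.cong refl arg_cong[where f = "\<lambda>A. sum _ A"])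
       (auto simp: indices_deg_le_def)
  also have "\<dots> = (\<Sum>m\<le>D. (\<Sum>i\<in>UNIV. (cmod (z $ i))\<^sup>2) ^ m)"
    by (simp add: multinomial_theorem sq)
  finally show ?thesis by (simp add: norm_power_sum_def norm_vec_power2 power_mult)
qed

lemma norm_power_sum_le: "norm z \<le> 1 \<Longrightarrow> norm_power_sum D z \<le> real D + 1"
proof -
  assume "norm z \<le> 1"
  then have "norm_power_sum D z \<le> (\<Sum>m\<le>D. 1)"
    unfolding norm_power_sum_def by (intro sum_mono power_le_one) auto
  then show ?thesis by simp
qed

lemma norm_power_sum_sphere: "norm z = 1 \<Longrightarrow> norm_power_sum D z = real D + 1"
  by (simp add: norm_power_sum_def)

definition coeff_mass :: "nat \<Rightarrow> (('n::finite \<Rightarrow> nat) \<Rightarrow> complex) \<Rightarrow> real" where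
  "coeff_mass D c = (\<Sum>\<alpha>\<in>indices_deg_le D. (cmod (c \<alpha>))\<^sup>2 / multinomial_coeff \<alpha>)"

lemma coeff_mass_nonneg: "coeff_mass D c \<ge> 0"
  unfolding coeff_mass_def by (intro sum_nonneg divide_nonneg_pos multinomial_coeff_pos) auto

text \<open>The Lagrange identity for the vectors \<open>(c_\<alpha>/\<surd>m_\<alpha>)\<close> and \<open>(\<surd>m_\<alpha> z^\<alpha>)\<close>, with \<open>m_\<alpha>\<close> the
multinomial coefficients, has the defect \<open>(1/2) \<Sum>_(\<alpha>,\<beta>) |lagrange_term c \<alpha> \<beta> z|^2\<close>.\<close>

definition lagrange_term ::
    "(('n::finite \<Rightarrow> nat) \<Rightarrow> complex) \<Rightarrow> ('n \<Rightarrow> nat) \<Rightarrow> ('n \<Rightarrow> nat) \<Rightarrow> complex^'n \<Rightarrow> complex" where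
  "lagrange_term c \<alpha> \<beta> z =
     cnj (c \<alpha> / of_real (sqrt (multinomial_coeff \<alpha>))) * (of_real (sqrt (multinomial_coeff \<beta>)) * cmonomial \<beta> z)
   - cnj (c \<beta> / of_real (sqrt (multinomial_coeff \<beta>))) * (of_real (sqrt (multinomial_coeff \<alpha>)) * cmonomial \<alpha> z)"

lemma cpoly_deg_le_lagrange_term:
  assumes "\<alpha> \<in> indices_deg_le D" "\<beta> \<in> indices_deg_le D"
  shows "cpoly_deg_le D (lagrange_term c \<alpha> \<beta>)"
  unfolding lagrange_term_def[abs_def] mult.assoc[symmetric]
  by (intro cpoly_deg_le_diff cpoly_deg_le_cmult cpoly_deg_le_cmonomial assms)

definition lagrange_defect :: "nat \<Rightarrow> (('n::finite \<Rightarrow> nat) \<Rightarrow> complex) \<Rightarrow> complex^'n \<Rightarrow> real" where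
  "lagrange_defect D c z =
     (1/2) * (\<Sum>\<alpha>\<in>indices_deg_le D. \<Sum>\<beta>\<in>indices_deg_le D. (cmod (lagrange_term c \<alpha> \<beta> z))\<^sup>2)"

lemma cmod_sq_add_lagrange_defect:
  assumes g: "\<forall>z. g z = (\<Sum>\<alpha>\<in>indices_deg_le D. c \<alpha> * cmonomial \<alpha> z)"
  shows "(cmod (g z))\<^sup>2 + lagrange_defect D c z = coeff_mass D c * norm_power_sum D (z::complex^'n::finite)"
proof -
  define x where "x \<alpha> = c \<alpha> / of_real (sqrt (multinomial_coeff \<alpha>))" for \<alpha>
  define y where "y \<alpha> = of_real (sqrt (multinomial_coeff \<alpha>)) * cmonomial \<alpha> z" for \<alpha>
  have pos: "multinomial_coeff \<alpha> > 0" for \<alpha> :: "'n \<Rightarrow> nat" by (rule multinomial_coeff_pos)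
  have xy: "x \<alpha> * y \<alpha> = c \<alpha> * cmonomial \<alpha> z" for \<alpha>
    using pos[of \<alpha>] by (simp add: x_def y_def)
  have x2: "(cmod (x \<alpha>))\<^sup>2 = (cmod (c \<alpha>))\<^sup>2 / multinomial_coeff \<alpha>" for \<alpha>
    using pos[of \<alpha>] by (simp add: x_def norm_divide power_divide)
  have y2: "(cmod (y \<alpha>))\<^sup>2 = multinomial_coeff \<alpha> * (cmod (cmonomial \<alpha> z))\<^sup>2" for \<alpha>
    using pos[of \<alpha>] by (simp add: y_def norm_mult power_mult_distrib)
  have u: "lagrange_term c \<alpha> \<beta> z = cnj (x \<alpha>) * y \<beta> - cnj (x \<beta>) * y \<alpha>" for \<alpha> \<beta>
    by (simp add: lagrange_term_def x_def y_def)
  have "coeff_mass D c * norm_power_sum D z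
      = (\<Sum>\<alpha>\<in>indices_deg_le D. (cmod (x \<alpha>))\<^sup>2) * (\<Sum>\<alpha>\<in>indices_deg_le D. (cmod (y \<alpha>))\<^sup>2)"
    unfolding x2 y2 sum_multinomial_coeff_cmonomial coeff_mass_def ..
  also have "\<dots> = (cmod (\<Sum>\<alpha>\<in>indices_deg_le D. x \<alpha> * y \<alpha>))\<^sup>2
      + (1/2) * (\<Sum>\<alpha>\<in>indices_deg_le D. \<Sum>\<beta>\<in>indices_deg_le D. (cmod (cnj (x \<alpha>) * y \<beta> - cnj (x \<beta>) * y \<alpha>))\<^sup>2)"
    by (rule lagrange_identity_cmod) simp
  finally show ?thesis unfolding xy u g[rule_format] lagrange_defect_def by simp
qed

lemma exp_le_one_plus_inverse_power: "exp 1 \<le> (1 + 1 / (real k + 1)) ^ (k + 2)"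
proof -
  define b where "b = 1 + 1 / (real k + 1)"
  have b0: "b > 0" by (simp add: b_def add_pos_nonneg)
  have "(1 - 1 / real (k + 2)) ^ (k + 2) \<le> exp (- 1)"
    by (rule exp_ge_one_minus_x_over_n_power_n) auto
  moreover have "1 - 1 / real (k + 2) = inverse b" by (simp add: b_def field_simps)
  ultimately have "inverse (b ^ (k + 2)) \<le> inverse (exp 1)" by (simp add: power_inverse exp_minus)
  then have "exp 1 \<le> b ^ (k + 2)" using b0 by (subst (asm) inverse_le_iff_le) auto
  then show ?thesis unfolding b_def .
qed

lemma fact_le_succ_power_div_exp: "fact k \<le> (real k + 1) ^ (k + 1) / exp (real k)"
proof (induction k)
  case 0 then show ?case by simp
next
  case (Suc k)
  have E: "exp 1 * (real k + 1) ^ (k + 2) \<le> (real k + 2) ^ (k + 2)"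
  proof -
    have "exp 1 * (real k + 1) ^ (k + 2) \<le> (1 + 1 / (real k + 1)) ^ (k + 2) * (real k + 1) ^ (k + 2)"
      by (intro mult_right_mono exp_le_one_plus_inverse_power) auto
    also have "\<dots> = ((1 + 1 / (real k + 1)) * (real k + 1)) ^ (k + 2)"
      by (simp add: power_mult_distrib)
    also have "(1 + 1 / (real k + 1)) * (real k + 1) = real k + 2" by (simp add: field_simps)
    finally show ?thesis .
  qed
  have "(fact (Suc k) :: real) = (real k + 1) * fact k" by simp
  also have "\<dots> \<le> (real k + 1) * ((real k + 1) ^ (k + 1) / exp (real k))"
    by (intro mult_left_mono Suc.IH) auto
  also have "\<dots> = exp 1 * (real k + 1) ^ (k + 2) / exp (real k + 1)"
    by (simp add: exp_add)
  also have "\<dots> \<le> (real k + 2) ^ (k + 2) / exp (real k + 1)"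
    by (intro divide_right_mono E) auto
  finally show ?case by (simp add: add_ac)
qed

lemma fact_le_stirling_bound: "fact k \<le> exp 1 * (real k + 1) * real k ^ k / exp (real k)"
proof (cases "k = 0")
  case False
  have "(1 + 1 / real k) ^ k \<le> exp 1"
    by (rule exp_ge_one_plus_x_over_n_power_n) (use False in auto)
  then have "(real k + 1) ^ k \<le> real k ^ k * exp 1"
    using False by (simp add: power_mult_distrib[symmetric] field_simps)
  then have "(real k + 1) * (real k + 1) ^ k \<le> (real k + 1) * (real k ^ k * exp 1)"
    by (intro mult_left_mono) auto
  then have "(real k + 1) ^ (k + 1) \<le> exp 1 * (real k + 1) * real k ^ k"
    by (simp add: algebra_simps)
  then show ?thesis
    using fact_le_succ_power_div_exp[of k] by (smt (verit) divide_right_mono exp_gt_zero)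
qed simp

lemma power_div_exp_le_fact: "real k ^ k / exp (real k) \<le> fact k"
proof -
  have exp: "(\<lambda>n. real k ^ n / fact n) sums exp (real k)"
    using exp_converges[of "real k"] by (simp add: field_simps)
  have "(\<Sum>n\<in>{k}. real k ^ n / fact n) \<le> (\<Sum>n. real k ^ n / fact n)"
    by (rule sum_le_suminf[OF sums_summable[OF exp]]) auto
  then have "real k ^ k / fact k \<le> exp (real k)" using sums_unique[OF exp] by simp
  then show ?thesis by (simp add: field_simps)
qed

section \<open>Cauchy estimates for the coefficients\<close>

lemma fps_expansion_nth_bound:
  fixes f :: "complex \<Rightarrow> complex"
  assumes hol: "f holomorphic_on ball 0 R" and fe: "f has_fps_expansion F"
    and rho: "0 < \<rho>" "\<rho> < R" and bnd: "\<forall>w. norm w = \<rho> \<longrightarrow> norm (f w) \<le> B"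
  shows "norm (F $ k) \<le> B / \<rho> ^ k"
proof -
  have "F $ k = (deriv ^^ k) f 0 / fact k" by (rule fps_nth_fps_expansion[OF fe])
  moreover have "norm ((deriv ^^ k) f 0) \<le> fact k * B / \<rho> ^ k"
  proof (rule Cauchy_inequality)
    show "f holomorphic_on ball 0 \<rho>" by (rule holomorphic_on_subset[OF hol]) (use rho in auto)
    have "cball 0 \<rho> \<subseteq> ball (0::complex) R" using rho by auto
    then show "continuous_on (cball 0 \<rho>) f"
      using holomorphic_on_imp_continuous_on[OF hol] by (rule continuous_on_subset[rotated])
    show "0 < \<rho>" by fact
    show "norm (f x) \<le> B" if "norm (0 - x) = \<rho>" for x using bnd that by auto
  qed
  ultimately have "norm (F $ k) = norm ((deriv ^^ k) f 0) / fact k" by (simp add: norm_divide)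
  also have "\<dots> \<le> (fact k * B / \<rho> ^ k) / fact k"
    by (rule divide_right_mono) (fact, simp)
  also have "\<dots> = B / \<rho> ^ k" by simp
  finally show ?thesis .
qed

lemma sparse_poly_coeff_bound_on_circle:
  fixes a :: "'k \<Rightarrow> complex" and E :: "'k \<Rightarrow> nat"
  assumes A: "finite A" "inj_on E A" and bnd: "\<forall>l. norm l = 1 \<longrightarrow> norm (\<Sum>k\<in>A. a k * l ^ E k) \<le> \<epsilon>"
    and k0: "k0 \<in> A"
  shows "norm (a k0) \<le> \<epsilon>"
proof -
  let ?f = "\<lambda>l. \<Sum>k\<in>A. a k * l ^ E k"
  let ?F = "\<Sum>k\<in>A. fps_const (a k) * fps_X ^ E k"
  have fe: "?f has_fps_expansion ?F"
    by (intro has_fps_expansion_sum has_fps_expansion_cmult_left has_fps_expansion_fps_X_power)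
  have hol: "?f holomorphic_on ball 0 2" by (intro holomorphic_intros)
  have "norm (?F $ E k0) \<le> \<epsilon> / 1 ^ E k0"
    by (rule fps_expansion_nth_bound[OF hol fe]) (use bnd in auto)
  moreover have "?F $ E k0 = a k0"
  proof -
    have "?F $ E k0 = (\<Sum>k\<in>A. if k = k0 then a k else 0)"
      unfolding fps_sum_nth fps_mult_left_const_nth fps_X_power_nth
      using A k0 by (intro sum.cong refl) (auto dest: inj_onD)
    also have "\<dots> = a k0" using A k0 by simp
    finally show ?thesis .
  qed
  ultimately show ?thesis by simp
qed

lemma exists_weights_inj_on_indices:
  fixes A :: "('n::finite \<Rightarrow> nat) set"
  assumes "finite A"
  shows "\<exists>e::'n\<Rightarrow>nat. inj_on (\<lambda>\<alpha>. \<Sum>i\<in>UNIV. e i * \<alpha> i) A"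
proof -
  obtain idx :: "'n \<Rightarrow> nat" where idx: "inj_on idx UNIV"
    using finite_imp_inj_to_nat_seg[of "UNIV::'n set"] by auto
  define P where "P \<alpha> \<beta> = (\<Sum>i\<in>UNIV. monom (real (\<alpha> i) - real (\<beta> i)) (idx i))" for \<alpha> \<beta> :: "'n \<Rightarrow> nat"
  have Pnz: "P \<alpha> \<beta> \<noteq> 0" if "\<alpha> \<noteq> \<beta>" for \<alpha> \<beta>
  proof -
    obtain i0 where i0: "\<alpha> i0 \<noteq> \<beta> i0" using \<open>\<alpha> \<noteq> \<beta>\<close> by auto
    have "coeff (P \<alpha> \<beta>) (idx i0) = (\<Sum>i\<in>UNIV. if i = i0 then real (\<alpha> i) - real (\<beta> i) else 0)"
      unfolding P_def coeff_sum coeff_monom using idx by (intro sum.cong refl) (auto dest: inj_onD)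
    also have "\<dots> = real (\<alpha> i0) - real (\<beta> i0)" by simp
    finally show ?thesis using i0 by auto
  qed
  \<comment> \<open>The weights \<open>t ^ idx i\<close> separate \<open>A\<close> unless \<open>t\<close> is a root of one of the \<open>P \<alpha> \<beta>\<close>.\<close>
  define U where "U = (\<Union>p\<in>{p\<in>A \<times> A. fst p \<noteq> snd p}. {x. poly (P (fst p) (snd p)) x = 0})"
  have "finite U" unfolding U_def using assms
    by (intro finite_UN_I) (auto intro!: poly_roots_finite Pnz)
  then have "finite (of_nat -` U :: nat set)" by (intro finite_vimageI) (auto simp: inj_on_def)
  then obtain t :: nat where t: "t \<notin> of_nat -` U" using ex_new_if_finite[OF infinite_UNIV_nat] by blast
  define e where "e i = t ^ idx i" for i
  have "inj_on (\<lambda>\<alpha>. \<Sum>i\<in>UNIV. e i * \<alpha> i) A"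
  proof (rule inj_onI, rule ccontr)
    fix \<alpha> \<beta> assume ab: "\<alpha> \<in> A" "\<beta> \<in> A" "(\<Sum>i\<in>UNIV. e i * \<alpha> i) = (\<Sum>i\<in>UNIV. e i * \<beta> i)" "\<alpha> \<noteq> \<beta>"
    have "poly (P \<alpha> \<beta>) (real t) = (\<Sum>i\<in>UNIV. real (e i * \<alpha> i)) - (\<Sum>i\<in>UNIV. real (e i * \<beta> i))"
      unfolding P_def poly_sum poly_monom e_def by (simp add: algebra_simps sum_subtractf)
    also have "\<dots> = 0" using ab(3) by (simp only: of_nat_sum[symmetric])
    finally have "real t \<in> U" unfolding U_def using ab by auto
    then show False using t by auto
  qed
  then show ?thesis by blast
qed

lemma coeff_monomial_bound_on_sphere:
  fixes g :: "complex^'n::finite \<Rightarrow> complex" and r :: "'n \<Rightarrow> real"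
  assumes g: "\<forall>z. g z = (\<Sum>\<alpha>\<in>indices_deg_le D. c \<alpha> * cmonomial \<alpha> z)"
    and bnd: "\<forall>z. norm z = 1 \<longrightarrow> cmod (g z) \<le> \<epsilon>"
    and a0: "\<alpha>0 \<in> indices_deg_le D" and r: "\<forall>i. r i \<ge> 0" "(\<Sum>i\<in>UNIV. (r i)\<^sup>2) = 1"
  shows "cmod (c \<alpha>0) * (\<Prod>i\<in>UNIV. r i ^ \<alpha>0 i) \<le> \<epsilon>"
proof -
  obtain e :: "'n \<Rightarrow> nat" where e: "inj_on (\<lambda>\<alpha>. \<Sum>i\<in>UNIV. e i * \<alpha> i) (indices_deg_le D)"
    using exists_weights_inj_on_indices[OF finite_indices_deg_le] by blast
  define E where "E \<alpha> = (\<Sum>i\<in>UNIV. e i * \<alpha> i)" for \<alpha> :: "'n \<Rightarrow> nat"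
  define a where "a \<alpha> = c \<alpha> * of_real (\<Prod>i\<in>UNIV. r i ^ \<alpha> i)" for \<alpha>
  \<comment> \<open>On the curve \<open>l \<mapsto> (r_i l^(e_i))\<close> in the sphere, \<open>g\<close> is a polynomial in \<open>l\<close> with distinct exponents.\<close>
  have "norm (a \<alpha>0) \<le> \<epsilon>"
  proof (rule sparse_poly_coeff_bound_on_circle[of "indices_deg_le D" E])
    show "inj_on E (indices_deg_le D)" using e unfolding E_def .
    show "\<forall>l. norm l = 1 \<longrightarrow> norm (\<Sum>\<alpha>\<in>indices_deg_le D. a \<alpha> * l ^ E \<alpha>) \<le> \<epsilon>"
    proof (intro allI impI)
      fix l :: complex assume l: "norm l = 1"
      define w where "w = (\<chi> i. complex_of_real (r i) * l ^ e i)"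
      have "(norm w)\<^sup>2 = 1" unfolding norm_vec_power2 w_def using l r
        by (simp add: norm_mult norm_power)
      then have nw: "norm w = 1" using norm_ge_zero[of w] by (simp add: power2_eq_1_iff)
      have "cmonomial \<alpha> w = of_real (\<Prod>i\<in>UNIV. r i ^ \<alpha> i) * l ^ E \<alpha>" for \<alpha>
        by (simp add: cmonomial_def w_def E_def power_mult_distrib prod.distrib power_sum power_mult[symmetric] mult.commute)
      then have "g w = (\<Sum>\<alpha>\<in>indices_deg_le D. a \<alpha> * l ^ E \<alpha>)" unfolding g[rule_format] a_def
        by (simp add: mult.assoc)
      then show "norm (\<Sum>\<alpha>\<in>indices_deg_le D. a \<alpha> * l ^ E \<alpha>) \<le> \<epsilon>" using bnd nw by metis
    qed
  qed (use a0 in auto)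
  moreover have "norm (a \<alpha>0) = cmod (c \<alpha>0) * (\<Prod>i\<in>UNIV. r i ^ \<alpha>0 i)"
  proof -
    have "norm (a \<alpha>0) = cmod (c \<alpha>0) * norm (complex_of_real (\<Prod>i\<in>UNIV. r i ^ \<alpha>0 i))"
      by (simp only: a_def norm_mult)
    also have "norm (complex_of_real (\<Prod>i\<in>UNIV. r i ^ \<alpha>0 i)) = (\<Prod>i\<in>UNIV. r i ^ \<alpha>0 i)"
      by (simp only: norm_of_real) (use r in \<open>simp add: prod_nonneg\<close>)
    finally show ?thesis .
  qed
  ultimately show ?thesis by simp
qed

lemma inverse_multinomial_coeff_bound:
  fixes \<alpha> :: "'n::finite \<Rightarrow> nat"
  assumes m: "total_degree \<alpha> = m" "m > 0"
  shows "1 / multinomial_coeff \<alpha> \<le> exp 1 ^ CARD('n) * (real m + 1) ^ CARD('n) * (\<Prod>i\<in>UNIV. (real (\<alpha> i) / real m) ^ \<alpha> i)"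
proof -
  have sa: "(\<Sum>i\<in>UNIV. \<alpha> i) = m" using m by (simp add: total_degree_def)
  have "(\<Prod>i\<in>UNIV. fact (\<alpha> i) :: real) \<le> (\<Prod>i\<in>UNIV. exp 1 * (real (\<alpha> i) + 1) * real (\<alpha> i) ^ \<alpha> i / exp (real (\<alpha> i)))"
    by (intro prod_mono conjI fact_le_stirling_bound) auto
  also have "\<dots> = exp 1 ^ CARD('n) * (\<Prod>i\<in>UNIV. real (\<alpha> i) + 1) * (\<Prod>i\<in>UNIV. real (\<alpha> i) ^ \<alpha> i) / exp (real m)"
    by (simp add: prod.distrib prod_dividef exp_sum[symmetric] sa flip: of_nat_sum)
  finally have P: "(\<Prod>i\<in>UNIV. fact (\<alpha> i) :: real) \<le> exp 1 ^ CARD('n) * (\<Prod>i\<in>UNIV. real (\<alpha> i) + 1) * (\<Prod>i\<in>UNIV. real (\<alpha> i) ^ \<alpha> i) / exp (real m)" .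
  have L: "real m ^ m / exp (real m) \<le> fact m" by (rule power_div_exp_le_fact)
  have mm: "real m ^ m = (\<Prod>i\<in>UNIV. real m ^ \<alpha> i)" by (simp add: power_sum[symmetric] sa)
  have T: "(\<Prod>i\<in>UNIV. real (\<alpha> i) ^ \<alpha> i) / real m ^ m = (\<Prod>i\<in>UNIV. (real (\<alpha> i) / real m) ^ \<alpha> i)"
    unfolding mm by (simp add: prod_dividef power_divide)
  have Q: "(\<Prod>i\<in>UNIV. real (\<alpha> i) + 1) \<le> (real m + 1) ^ CARD('n)"
  proof -
    have "(\<Prod>i\<in>UNIV. real (\<alpha> i) + 1) \<le> (\<Prod>i\<in>(UNIV::'n set). real m + 1)"
    proof (intro prod_mono conjI)
      fix i :: 'n
      have "\<alpha> i \<le> m" unfolding sa[symmetric] by (rule member_le_sum) auto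
      then show "real (\<alpha> i) + 1 \<le> real m + 1" by simp
    qed auto
    then show ?thesis by simp
  qed
  have mpos: "real m ^ m > 0" using m by simp
  have "1 / multinomial_coeff \<alpha> = (\<Prod>i\<in>UNIV. fact (\<alpha> i) :: real) / fact m"
    unfolding multinomial_coeff_def m by simp
  also have "\<dots> \<le> (exp 1 ^ CARD('n) * (\<Prod>i\<in>UNIV. real (\<alpha> i) + 1) * (\<Prod>i\<in>UNIV. real (\<alpha> i) ^ \<alpha> i) / exp (real m)) / (real m ^ m / exp (real m))"
    by (intro frac_le P L) (use mpos in \<open>auto simp: prod_nonneg intro!: divide_pos_pos\<close>)
  also have "\<dots> = exp 1 ^ CARD('n) * (\<Prod>i\<in>UNIV. real (\<alpha> i) + 1) * ((\<Prod>i\<in>UNIV. real (\<alpha> i) ^ \<alpha> i) / real m ^ m)"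
    by (simp add: field_simps)
  also have "\<dots> \<le> exp 1 ^ CARD('n) * (real m + 1) ^ CARD('n) * ((\<Prod>i\<in>UNIV. real (\<alpha> i) ^ \<alpha> i) / real m ^ m)"
    by (intro mult_right_mono mult_left_mono Q) (auto simp: prod_nonneg)
  finally show ?thesis unfolding T .
qed

lemma cmod_sq_coeff_mult_weight_le:
  fixes g :: "complex^'n::finite \<Rightarrow> complex"
  assumes g: "\<forall>z. g z = (\<Sum>\<alpha>\<in>indices_deg_le D. c \<alpha> * cmonomial \<alpha> z)"
    and bnd: "\<forall>z. norm z = 1 \<longrightarrow> cmod (g z) \<le> \<epsilon>" and a: "\<alpha> \<in> indices_deg_le D"
    and "0 < total_degree \<alpha>"
  shows "(cmod (c \<alpha>))\<^sup>2 * (\<Prod>i\<in>UNIV. (real (\<alpha> i) / real (total_degree \<alpha>)) ^ \<alpha> i) \<le> \<epsilon>\<^sup>2"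
proof -
  define m where "m = total_degree \<alpha>"
  define r where "r i = sqrt (real (\<alpha> i) / real m)" for i
  have "(\<Sum>i\<in>UNIV. (r i)\<^sup>2) = (\<Sum>i\<in>UNIV. real (\<alpha> i)) / real m"
    by (simp add: r_def sum_divide_distrib)
  also have "\<dots> = 1"
  proof -
    have "(\<Sum>i\<in>UNIV. real (\<alpha> i)) = real m" by (simp add: m_def total_degree_def)
    then show ?thesis using assms(4) by (simp add: m_def)
  qed
  finally have "cmod (c \<alpha>) * (\<Prod>i\<in>UNIV. r i ^ \<alpha> i) \<le> \<epsilon>"
    by (intro coeff_monomial_bound_on_sphere[OF g bnd a]) (simp_all add: r_def)
  then have "(cmod (c \<alpha>) * (\<Prod>i\<in>UNIV. r i ^ \<alpha> i))\<^sup>2 \<le> \<epsilon>\<^sup>2"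
    by (intro power_mono) (simp_all add: r_def prod_nonneg)
  moreover have "(\<Prod>i\<in>UNIV. r i ^ \<alpha> i)\<^sup>2 = (\<Prod>i\<in>UNIV. (real (\<alpha> i) / real m) ^ \<alpha> i)"
  proof -
    have "(\<Prod>i\<in>UNIV. r i ^ \<alpha> i)\<^sup>2 = (\<Prod>i\<in>UNIV. (r i ^ \<alpha> i)\<^sup>2)"
      by (rule prod_power_distrib)
    also have "\<dots> = (\<Prod>i\<in>UNIV. ((r i)\<^sup>2) ^ \<alpha> i)"
      by (intro prod.cong refl) (simp add: power_mult[symmetric] mult.commute)
    finally show ?thesis by (simp add: r_def)
  qed
  ultimately show ?thesis by (simp add: power_mult_distrib m_def)
qed

lemma coeff_sq_div_multinomial_coeff_bound:
  fixes g :: "complex^'n::finite \<Rightarrow> complex"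
  assumes g: "\<forall>z. g z = (\<Sum>\<alpha>\<in>indices_deg_le D. c \<alpha> * cmonomial \<alpha> z)"
    and bnd: "\<forall>z. norm z = 1 \<longrightarrow> cmod (g z) \<le> \<epsilon>" and a: "\<alpha> \<in> indices_deg_le D"
  shows "(cmod (c \<alpha>))\<^sup>2 / multinomial_coeff \<alpha> \<le> \<epsilon>\<^sup>2 * exp 1 ^ CARD('n) * (real D + 1) ^ CARD('n)"
proof (cases "total_degree \<alpha> = 0")
  case True
  then have a0: "\<alpha> = 0" by (auto simp: total_degree_def fun_eq_iff)
  fix i0 :: 'n
  have "(\<Sum>i\<in>UNIV. (if i = i0 then 1 else 0::real)\<^sup>2) = (\<Sum>i\<in>UNIV. if i = i0 then 1 else 0)"
    by (intro sum.cong) auto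
  then have "(\<Sum>i\<in>UNIV. (if i = i0 then 1 else 0::real)\<^sup>2) = 1" by simp
  then have "cmod (c \<alpha>) * (\<Prod>i\<in>UNIV. (if i = i0 then 1 else 0::real) ^ \<alpha> i) \<le> \<epsilon>"
    by (intro coeff_monomial_bound_on_sphere[OF g bnd a]) auto
  then have "(cmod (c \<alpha>))\<^sup>2 \<le> \<epsilon>\<^sup>2" by (simp add: a0 power_mono)
  moreover have "1 \<le> exp 1 ^ CARD('n) * (real D + 1) ^ CARD('n)"
    by (rule order_trans[OF _ mult_mono[OF one_le_power one_le_power]]) auto
  ultimately have "(cmod (c \<alpha>))\<^sup>2 \<le> \<epsilon>\<^sup>2 * (exp 1 ^ CARD('n) * (real D + 1) ^ CARD('n))"
    by (metis mult.right_neutral mult_left_mono order_trans zero_le_power2)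
  then show ?thesis by (simp add: a0 multinomial_coeff_def total_degree_def mult.assoc)
next
  case False
  define m where "m = total_degree \<alpha>"
  define T where "T = (\<Prod>i\<in>UNIV. (real (\<alpha> i) / real m) ^ \<alpha> i)"
  have cT: "(cmod (c \<alpha>))\<^sup>2 * T \<le> \<epsilon>\<^sup>2"
    using cmod_sq_coeff_mult_weight_le[OF g bnd a] False by (simp add: T_def m_def)
  have "(cmod (c \<alpha>))\<^sup>2 / multinomial_coeff \<alpha> = (cmod (c \<alpha>))\<^sup>2 * (1 / multinomial_coeff \<alpha>)" by simp
  also have "\<dots> \<le> (cmod (c \<alpha>))\<^sup>2 * (exp 1 ^ CARD('n) * (real m + 1) ^ CARD('n) * T)"
    unfolding T_def using False by (intro mult_left_mono inverse_multinomial_coeff_bound) (auto simp: m_def)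
  also have "\<dots> = ((cmod (c \<alpha>))\<^sup>2 * T) * (exp 1 ^ CARD('n) * (real m + 1) ^ CARD('n))" by simp
  also have "\<dots> \<le> \<epsilon>\<^sup>2 * (exp 1 ^ CARD('n) * (real D + 1) ^ CARD('n))"
    using a by (intro mult_mono cT mult_left_mono power_mono) (auto simp: m_def indices_deg_le_def)
  finally show ?thesis by (simp add: mult.assoc)
qed

lemma coeff_mass_bound:
  fixes g :: "complex^'n::finite \<Rightarrow> complex"
  assumes g: "\<forall>z. g z = (\<Sum>\<alpha>\<in>indices_deg_le D. c \<alpha> * cmonomial \<alpha> z)"
    and bnd: "\<forall>z. norm z = 1 \<longrightarrow> cmod (g z) \<le> \<epsilon>"
  shows "coeff_mass D c \<le> \<epsilon>\<^sup>2 * exp 1 ^ CARD('n) * (real D + 1) ^ (2 * CARD('n))"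
proof -
  have "coeff_mass D c \<le> (\<Sum>\<alpha>\<in>(indices_deg_le D :: ('n \<Rightarrow> nat) set). \<epsilon>\<^sup>2 * exp 1 ^ CARD('n) * (real D + 1) ^ CARD('n))"
    unfolding coeff_mass_def by (rule sum_mono) (rule coeff_sq_div_multinomial_coeff_bound[OF g bnd])
  also have "\<dots> = real (card (indices_deg_le D :: ('n \<Rightarrow> nat) set)) * (\<epsilon>\<^sup>2 * exp 1 ^ CARD('n) * (real D + 1) ^ CARD('n))"
    by simp
  also have "\<dots> \<le> (real D + 1) ^ CARD('n) * (\<epsilon>\<^sup>2 * exp 1 ^ CARD('n) * (real D + 1) ^ CARD('n))"
  proof (rule mult_right_mono)
    have "card (indices_deg_le D :: ('n \<Rightarrow> nat) set) \<le> (D+1) ^ CARD('n)" by (rule card_indices_deg_le)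
    then have "real (card (indices_deg_le D :: ('n \<Rightarrow> nat) set)) \<le> real ((D+1) ^ CARD('n))" by (simp only: of_nat_le_iff)
    then show "real (card (indices_deg_le D :: ('n \<Rightarrow> nat) set)) \<le> (real D + 1) ^ CARD('n)" by (simp add: add.commute)
  qed auto
  also have "\<dots> = \<epsilon>\<^sup>2 * exp 1 ^ CARD('n) * (real D + 1) ^ (2 * CARD('n))"
    by (simp add: power_mult mult_2 power_add)
  finally show ?thesis .
qed

section \<open>Polynomial approximation of \<open>1/q\<close> on the sphere\<close>

lemma norm_vector_smult: "norm (l *s (z::complex^'n::finite)) = cmod l * norm z"
proof -
  have "(norm (l *s z))\<^sup>2 = (cmod l * norm z)\<^sup>2"
    unfolding norm_vec_power2 power_mult_distrib
    by (simp add: norm_mult power_mult_distrib sum_distrib_left)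
  then show ?thesis by (simp add: power2_eq_iff_nonneg)
qed

lemma exists_larger_ball_nonvanishing:
  fixes q :: "'a::euclidean_space \<Rightarrow> 'b::real_normed_vector"
  assumes "continuous_on UNIV q" "\<forall>z\<in>cball 0 1. q z \<noteq> 0"
  obtains R where "R > 1" "\<And>w. norm w < R \<Longrightarrow> q w \<noteq> 0"
proof (cases "\<exists>w. q w = 0")
  case False
  then show ?thesis by (intro that[of 2]) auto
next
  case True
  have "closed {w. q w = 0}"
    using assms(1) by (intro closed_Collect_eq continuous_on_const) auto
  moreover have "{w. q w = 0} \<noteq> {}" using True by blast
  ultimately obtain z0 where z0: "z0 \<in> {w. q w = 0}" "\<And>y. y \<in> {w. q w = 0} \<Longrightarrow> dist 0 z0 \<le> dist 0 y"
    by (rule distance_attains_inf[where a = 0]) blast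
  have "z0 \<notin> cball 0 1" using z0(1) assms(2) by blast
  then have "norm z0 > 1" by simp
  moreover have "q w \<noteq> 0" if "norm w < norm z0" for w
    using z0(2)[of w] that by (auto simp: dist_0_norm)
  ultimately show ?thesis by (rule that)
qed

lemma cpoly_deg_le_homogeneous_expansion:
  assumes "cpoly_deg_le d q"
  obtains qh C where "\<And>j. cpoly_deg_le j (qh j)" "\<And>l z. q (l *s z) = (\<Sum>j\<le>d. qh j z * l ^ j)"
    "\<And>j z. norm z \<le> 1 \<Longrightarrow> cmod (qh j z) \<le> C"
proof -
  obtain cq where cq: "\<forall>z. q z = (\<Sum>\<alpha>\<in>indices_deg_le d. cq \<alpha> * cmonomial \<alpha> z)"
    using assms by (auto simp: cpoly_deg_le_def)
  define qh where "qh j z = (\<Sum>\<alpha>\<in>{\<alpha>\<in>indices_deg_le d. total_degree \<alpha> = j}. cq \<alpha> * cmonomial \<alpha> z)" for j z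
  have "cpoly_deg_le j (qh j)" for j
    unfolding qh_def[abs_def]
    by (rule cpoly_deg_leI[where A = "{\<alpha>\<in>indices_deg_le d. total_degree \<alpha> = j}" and c = cq])
       (auto simp: indices_deg_le_def)
  moreover have "q (l *s z) = (\<Sum>j\<le>d. qh j z * l ^ j)" for l z
  proof -
    have "q (l *s z) = (\<Sum>j\<le>d. qh j (l *s z))"
      unfolding cq[rule_format] qh_def
      by (rule sum.group[symmetric])
         (auto simp: indices_deg_le_def finite_indices_deg_le[unfolded indices_deg_le_def])
    then show ?thesis by (simp add: qh_def cmonomial_scale sum_distrib_left mult_ac)
  qed
  moreover have "cmod (qh j z) \<le> (\<Sum>\<alpha>\<in>indices_deg_le d. cmod (cq \<alpha>))" if "norm z \<le> 1" for j z
  proof -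
    have "cmod (qh j z) \<le> (\<Sum>\<alpha>\<in>{\<alpha>\<in>indices_deg_le d. total_degree \<alpha> = j}. cmod (cq \<alpha> * cmonomial \<alpha> z))"
      unfolding qh_def by (rule norm_sum)
    also have "\<dots> \<le> (\<Sum>\<alpha>\<in>{\<alpha>\<in>indices_deg_le d. total_degree \<alpha> = j}. cmod (cq \<alpha>))"
      by (intro sum_mono) (auto simp: norm_mult intro!: mult_left_le norm_cmonomial_le_1 that)
    also have "\<dots> \<le> (\<Sum>\<alpha>\<in>indices_deg_le d. cmod (cq \<alpha>))" by (rule sum_mono2) auto
    finally show ?thesis .
  qed
  ultimately show ?thesis by (rule that)
qed

lemma cpoly_deg_le_fps_inverse_nth:
  fixes Q :: "complex^'n::finite \<Rightarrow> complex fps"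
  assumes Q: "\<And>j. cpoly_deg_le j (\<lambda>z. Q z $ j)" and Q0: "\<And>z. Q z $ 0 = a"
  shows "cpoly_deg_le k (\<lambda>z. inverse (Q z) $ k)"
proof (induction k rule: less_induct)
  case (less k)
  show ?case
  proof (cases "k = 0")
    case True then show ?thesis by (simp add: Q0 cpoly_deg_le_const)
  next
    case False
    have rec: "inverse (Q z) $ k = - inverse a * (\<Sum>j\<in>{1..k}. Q z $ j * inverse (Q z) $ (k - j))" for z
      using False unfolding fps_inverse_def by (simp add: fps_right_inverse_constructor_rec Q0)
    have "cpoly_deg_le (j + (k - j)) (\<lambda>z. Q z $ j * inverse (Q z) $ (k - j))" if "j \<in> {1..k}" for j
      using that by (intro cpoly_deg_le_mult Q less) auto
    then have "cpoly_deg_le k (\<lambda>z. - inverse a * (\<Sum>j\<in>{1..k}. Q z $ j * inverse (Q z) $ (k - j)))"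
      by (intro cpoly_deg_le_cmult cpoly_deg_le_sum) auto
    then show ?thesis by (simp add: rec)
  qed
qed

lemma fps_inverse_nth_bound:
  fixes a :: "nat \<Rightarrow> complex"
  assumes nz: "\<And>l. norm l < R' \<Longrightarrow> (\<Sum>j\<le>d. a j * l ^ j) \<noteq> 0" and R: "0 < R" "R < R'"
    and bound: "\<And>l. norm l = R \<Longrightarrow> norm (inverse (\<Sum>j\<le>d. a j * l ^ j)) \<le> B"
  shows "norm (inverse (\<Sum>j\<le>d. fps_const (a j) * fps_X ^ j) $ k) \<le> B / R ^ k"
proof -
  let ?P = "\<lambda>l. \<Sum>j\<le>d. a j * l ^ j"
  have "?P has_fps_expansion (\<Sum>j\<le>d. fps_const (a j) * fps_X ^ j)"
    by (intro has_fps_expansion_sum has_fps_expansion_cmult_left has_fps_expansion_fps_X_power)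
  moreover have "(\<Sum>j\<le>d. fps_const (a j) * fps_X ^ j) $ 0 = ?P 0"
    by (simp add: fps_sum_nth power_0_left if_distrib cong: if_cong)
  moreover have "?P 0 \<noteq> 0" using nz[of 0] R by simp
  ultimately have "(\<lambda>l. inverse (?P l)) has_fps_expansion inverse (\<Sum>j\<le>d. fps_const (a j) * fps_X ^ j)"
    by (intro has_fps_expansion_inverse) auto
  moreover have "(\<lambda>l. inverse (?P l)) holomorphic_on ball 0 R'"
    using nz by (intro holomorphic_intros) auto
  ultimately show ?thesis using R bound by (intro fps_expansion_nth_bound) auto
qed

lemma truncated_inverse_error:
  fixes a b :: "nat \<Rightarrow> complex"
  assumes conv: "\<And>k. (\<Sum>j\<le>k. a j * b (k - j)) = (if k = 0 then 1 else 0)"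
    and a0: "\<And>j. d < j \<Longrightarrow> a j = 0"
    and a_bound: "\<And>j. cmod (a j) \<le> Ca" and b_bound: "\<And>i. cmod (b i) \<le> Cb / R ^ i" and R: "1 \<le> R"
  shows "cmod (1 - (\<Sum>j\<le>d. a j) * (\<Sum>i\<le>K. b i)) \<le> real (d + 1) * (real K + 1) * (Ca * (Cb * R ^ d / R ^ K))"
proof -
  have Ca: "0 \<le> Ca" and Cb: "0 \<le> Cb"
    using a_bound[of 0] b_bound[of 0] by (auto intro: order_trans[OF norm_ge_zero])
  let ?lo = "\<lambda>j i. if i + j \<le> K then a j * b i else 0"
  let ?hi = "\<lambda>j i. if i + j \<le> K then 0 else a j * b i"
  have "(\<Sum>j\<le>d. \<Sum>i\<le>K. ?lo j i) = (\<Sum>k<K+1. \<Sum>j\<le>k. a j * b (k - j))"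
  proof -
    have "(\<Sum>j\<le>d. \<Sum>i\<le>K. ?lo j i) = (\<Sum>p\<in>{..d+K} \<times> {..K}. ?lo (fst p) (snd p))"
      by (simp add: sum.cartesian_product split_def)
         (rule sum.mono_neutral_left; auto simp: not_le intro: a0)
    also have "\<dots> = (\<Sum>(j,i)\<in>{p. fst p + snd p < K + 1}. a j * b i)"
      by (rule sum.mono_neutral_cong_right) auto
    also have "\<dots> = (\<Sum>k<K+1. \<Sum>j\<le>k. a j * b (k - j))"
      using sum.triangle_reindex[of "\<lambda>j i. a j * b i" "K+1"] by (simp add: split_def)
    finally show ?thesis .
  qed
  then have lo: "(\<Sum>j\<le>d. \<Sum>i\<le>K. ?lo j i) = 1" by (simp add: conv)
  have "(\<Sum>j\<le>d. a j) * (\<Sum>i\<le>K. b i) = (\<Sum>j\<le>d. \<Sum>i\<le>K. ?lo j i) + (\<Sum>j\<le>d. \<Sum>i\<le>K. ?hi j i)"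
    by (simp add: sum_product sum.distrib[symmetric] if_distrib cong: if_cong)
  then have "cmod (1 - (\<Sum>j\<le>d. a j) * (\<Sum>i\<le>K. b i)) = cmod (\<Sum>j\<le>d. \<Sum>i\<le>K. ?hi j i)"
    by (simp add: lo norm_minus_commute)
  also have "\<dots> \<le> (\<Sum>j\<le>d. \<Sum>i\<le>K. cmod (?hi j i))"
    by (intro order_trans[OF norm_sum] sum_mono norm_sum)
  also have "\<dots> \<le> (\<Sum>j\<le>d. \<Sum>i\<le>K. Ca * (Cb * R ^ d / R ^ K))"
  proof (intro sum_mono)
    fix j i assume j: "j \<in> {..d}" and "i \<in> {..K}"
    show "cmod (?hi j i) \<le> Ca * (Cb * R ^ d / R ^ K)"
    proof (cases "i + j \<le> K")
      case False
      then have "R ^ K \<le> R ^ i * R ^ d" using j R by (auto simp flip: power_add intro: power_increasing)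
      then have "Cb / R ^ i \<le> Cb * R ^ d / R ^ K" using R Cb by (simp add: field_simps mult_left_mono)
      then have "cmod (b i) \<le> Cb * R ^ d / R ^ K" using b_bound order_trans by blast
      then have "cmod (a j) * cmod (b i) \<le> Ca * (Cb * R ^ d / R ^ K)"
        using a_bound[of j] Ca by (intro mult_mono) auto
      then show ?thesis using False by (simp add: norm_mult)
    qed (use Ca Cb R in simp)
  qed
  also have "\<dots> = real (d + 1) * (real K + 1) * (Ca * (Cb * R ^ d / R ^ K))" by simp
  finally show ?thesis .
qed

lemma fps_inverse_along_lines_bound:
  fixes q :: "complex^'n::finite \<Rightarrow> complex"
  assumes "cpoly q" "\<forall>z\<in>cball 0 1. q z \<noteq> 0"
    and qline: "\<And>l z. q (l *s z) = (\<Sum>j\<le>d. a j z * l ^ j)"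
  obtains R B where "R > 1" "B \<ge> 0"
    "\<And>i z. norm z = 1 \<Longrightarrow> cmod (inverse (\<Sum>j\<le>d. fps_const (a j z) * fps_X ^ j) $ i) \<le> B / R ^ i"
proof -
  obtain R' where R': "R' > 1" "\<And>w. norm w < R' \<Longrightarrow> q w \<noteq> 0"
    using exists_larger_ball_nonvanishing[OF cpoly_continuous_on[OF assms(1)] assms(2)] by blast
  define R where "R = (1 + R') / 2"
  have R: "1 < R" "R < R'" using R' by (auto simp: R_def)
  have "compact ((\<lambda>w. inverse (q w)) ` cball 0 R)"
    using R R' by (intro compact_continuous_image compact_cball continuous_on_inverse
        cpoly_continuous_on[OF assms(1)]) auto
  then obtain B where B: "\<forall>w\<in>cball 0 R. cmod (inverse (q w)) \<le> B"
    by (auto dest!: compact_imp_bounded simp: bounded_iff)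
  have "0 \<le> B" using B[rule_format, of 0] R by (auto intro: order_trans[OF norm_ge_zero])
  moreover have "cmod (inverse (\<Sum>j\<le>d. fps_const (a j z) * fps_X ^ j) $ i) \<le> B / R ^ i"
    if "norm z = 1" for i z
    using R R' B that
    by (intro fps_inverse_nth_bound[where R' = R']) (auto simp flip: qline simp: norm_vector_smult)
  ultimately show ?thesis using R by (intro that)
qed

lemma exists_approx_inverse:
  fixes q :: "complex^'n::finite \<Rightarrow> complex"
  assumes "cpoly q" and qnz: "\<forall>z\<in>cball 0 1. q z \<noteq> 0"
  obtains B R where "R > 1" "B \<ge> 0"
    "\<And>K. \<exists>r. cpoly_deg_le K r \<and> (\<forall>z. norm z = 1 \<longrightarrow> cmod (1 - q z * r z) \<le> B * (real K + 1) / R ^ K)"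
proof -
  obtain d where dq: "cpoly_deg_le d q" using cpoly_imp_deg_le[OF \<open>cpoly q\<close>] by blast
  obtain qh Cq where qh: "\<And>j. cpoly_deg_le j (qh j)"
    and qline: "\<And>l z. q (l *s z) = (\<Sum>j\<le>d. qh j z * l ^ j)"
    and qh_bound: "\<And>j z. norm z \<le> 1 \<Longrightarrow> cmod (qh j z) \<le> Cq"
    using cpoly_deg_le_homogeneous_expansion[OF dq] by blast
  have Cq: "0 \<le> Cq" using qh_bound[of 0 0] by (auto intro: order_trans[OF norm_ge_zero])
  have q0: "qh 0 z = q 0" for z
  proof -
    have "(\<Sum>j\<le>d. qh j z * 0 ^ j) = (\<Sum>j\<le>d. if j = 0 then qh j z else 0)" by (intro sum.cong) auto
    then show ?thesis using qline[of 0 z] by simp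
  qed
  define Qf where "Qf z = (\<Sum>j\<le>d. fps_const (qh j z) * fps_X ^ j)" for z
  obtain R B0 where R: "1 < R" and B0: "0 \<le> B0"
    and "\<And>i z. norm z = 1 \<Longrightarrow> cmod (inverse (\<Sum>j\<le>d. fps_const (qh j z) * fps_X ^ j) $ i) \<le> B0 / R ^ i"
    by (rule fps_inverse_along_lines_bound[OF assms qline]) (rule that)
  then have inverse_Qf_bound: "\<And>i z. norm z = 1 \<Longrightarrow> cmod (inverse (Qf z) $ i) \<le> B0 / R ^ i"
    by (simp add: Qf_def)
  have Qf_nth: "Qf z $ j = (if j \<le> d then qh j z else 0)" for z j
    unfolding Qf_def fps_sum_nth fps_mult_left_const_nth fps_X_power_nth
    by (auto simp: if_distrib cong: if_cong)
  have Qf_poly: "cpoly_deg_le j (\<lambda>z. Qf z $ j)" for j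
    by (cases "j \<le> d") (simp_all add: Qf_nth qh cpoly_deg_le_const)
  define B where "B = real (d + 1) * Cq * B0 * R ^ d"
  have "\<exists>r. cpoly_deg_le K r \<and> (\<forall>z. norm z = 1 \<longrightarrow> cmod (1 - q z * r z) \<le> B * (real K + 1) / R ^ K)" for K
  proof (intro exI conjI allI impI)
    show "cpoly_deg_le K (\<lambda>z. \<Sum>i\<le>K. inverse (Qf z) $ i)"
      using Qf_poly by (intro cpoly_deg_le_sum cpoly_deg_le_mono[OF cpoly_deg_le_fps_inverse_nth])
        (auto simp: Qf_nth q0)
    fix z :: "complex^'n" assume z: "norm z = 1"
    have "Qf z * inverse (Qf z) = 1"
      using qnz by (intro inverse_mult_eq_1') (simp add: Qf_nth q0)
    then have "(\<Sum>j\<le>k. Qf z $ j * inverse (Qf z) $ (k - j)) = (if k = 0 then 1 else 0)" for k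
      by (metis fps_mult_nth atLeast0AtMost fps_one_nth)
    then have "cmod (1 - (\<Sum>j\<le>d. Qf z $ j) * (\<Sum>i\<le>K. inverse (Qf z) $ i))
        \<le> real (d + 1) * (real K + 1) * (Cq * (B0 * R ^ d / R ^ K))"
      using z R Cq qh_bound inverse_Qf_bound by (intro truncated_inverse_error) (auto simp: Qf_nth)
    moreover have "(\<Sum>j\<le>d. Qf z $ j) = q z" using qline[of 1 z] by (simp add: Qf_nth)
    ultimately show "cmod (1 - q z * (\<Sum>i\<le>K. inverse (Qf z) $ i)) \<le> B * (real K + 1) / R ^ K"
      by (simp add: B_def mult_ac)
  qed
  moreover have "B \<ge> 0" using Cq B0 R by (simp add: B_def)
  ultimately show ?thesis using R by (intro that) auto
qed

lemma exists_poly_times_power_lt_1: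
  fixes C x :: real
  assumes "0 < x" "x < 1" "P > 0"
  shows "\<exists>K. C * (real K + 1) ^ P * x ^ K < 1"
proof -
  define y where "y = root P x"
  have y0: "y > 0" using assms by (simp add: y_def real_root_gt_zero)
  have y1: "y < 1" using assms by (simp add: y_def)
  have yP: "y ^ P = x" using assms by (simp add: y_def)
  have l1: "(\<lambda>K. of_nat K * y ^ K) \<longlonglongrightarrow> 0" by (rule powser_times_n_limit_0) (use y0 y1 in simp)
  have l2: "(\<lambda>K. y ^ K) \<longlonglongrightarrow> 0" by (rule LIMSEQ_power_zero) (use y0 y1 in simp)
  have "(\<lambda>K. real K * y ^ K + y ^ K) \<longlonglongrightarrow> 0 + 0" by (intro tendsto_add l1 l2)
  then have "(\<lambda>K. (real K + 1) * y ^ K) \<longlonglongrightarrow> 0" by (simp add: algebra_simps)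
  then have "(\<lambda>K. C * ((real K + 1) * y ^ K) ^ P) \<longlonglongrightarrow> C * 0 ^ P" by (intro tendsto_intros)
  moreover have "C * 0 ^ P = 0" using assms by (simp add: power_0_left)
  ultimately have "(\<lambda>K. C * ((real K + 1) * y ^ K) ^ P) \<longlonglongrightarrow> 0" by simp
  then have "eventually (\<lambda>K. C * ((real K + 1) * y ^ K) ^ P < 1) sequentially"
    by (rule order_tendstoD) simp
  then obtain K where "C * ((real K + 1) * y ^ K) ^ P < 1" by (auto dest: eventually_happens)
  moreover have "((real K + 1) * y ^ K) ^ P = (real K + 1) ^ P * x ^ K"
    by (simp add: power_mult_distrib yP[symmetric] power_mult[symmetric] mult.commute)
  ultimately show ?thesis by (auto simp: mult.assoc)
qed

lemma exists_approx_inverse_small_mass: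
  fixes q :: "complex^'n::finite \<Rightarrow> complex"
  assumes "cpoly q" "\<forall>z\<in>cball 0 1. q z \<noteq> 0"
  obtains K r b D c where "\<forall>z. r z = (\<Sum>\<alpha>\<in>indices_deg_le K. b \<alpha> * cmonomial \<alpha> z)"
    "\<forall>z. 1 - q z * r z = (\<Sum>\<alpha>\<in>indices_deg_le D. c \<alpha> * cmonomial \<alpha> z)"
    "coeff_mass D c * (real D + 1) < 1"
proof -
  obtain B R where R: "R > 1" and "B \<ge> 0" and approx:
    "\<And>K. \<exists>r. cpoly_deg_le K r \<and> (\<forall>z. norm z = 1 \<longrightarrow> cmod (1 - q z * r z) \<le> B * (real K + 1) / R ^ K)"
    by (rule exists_approx_inverse[OF assms]) (rule that)
  obtain d where dq: "cpoly_deg_le d q" using cpoly_imp_deg_le[OF assms(1)] by blast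
  define n where "n = CARD('n)"
  \<comment> \<open>The bound on the coefficient mass grows polynomially in \<open>K\<close>, the error like \<open>R^(-2K)\<close>.\<close>
  define C where "C = B\<^sup>2 * exp 1 ^ n * (real d + 1) ^ (2*n+1)"
  obtain K where K: "C * (real K + 1) ^ (2*n+3) * (1 / R\<^sup>2) ^ K < 1"
    using exists_poly_times_power_lt_1[of "1 / R\<^sup>2" "2*n+3" C] R by (auto simp: power_less_one_iff)
  obtain r where rK: "cpoly_deg_le K r"
    and r_approx: "\<forall>z. norm z = 1 \<longrightarrow> cmod (1 - q z * r z) \<le> B * (real K + 1) / R ^ K"
    using approx by blast
  obtain b where rb: "\<forall>z. r z = (\<Sum>\<alpha>\<in>indices_deg_le K. b \<alpha> * cmonomial \<alpha> z)"
    using rK by (auto simp: cpoly_deg_le_def)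
  define D where "D = d + K"
  have "cpoly_deg_le D (\<lambda>z. 1 - q z * r z)"
    unfolding D_def by (intro cpoly_deg_le_diff cpoly_deg_le_const cpoly_deg_le_mult dq rK)
  then obtain c where gc: "\<forall>z. 1 - q z * r z = (\<Sum>\<alpha>\<in>indices_deg_le D. c \<alpha> * cmonomial \<alpha> z)"
    by (auto simp: cpoly_deg_le_def)
  define \<epsilon> where "\<epsilon> = B * (real K + 1) / R ^ K"
  have "coeff_mass D c \<le> \<epsilon>\<^sup>2 * exp 1 ^ n * (real D + 1) ^ (2 * n)"
    unfolding n_def by (rule coeff_mass_bound[OF gc]) (use r_approx in \<open>simp add: \<epsilon>_def\<close>)
  then have "coeff_mass D c * (real D + 1) \<le> \<epsilon>\<^sup>2 * exp 1 ^ n * (real D + 1) ^ (2 * n) * (real D + 1)"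
    by (rule mult_right_mono) simp
  also have "\<dots> = \<epsilon>\<^sup>2 * exp 1 ^ n * (real D + 1) ^ (2 * n + 1)" by simp
  also have "\<dots> \<le> \<epsilon>\<^sup>2 * exp 1 ^ n * ((real d + 1) * (real K + 1)) ^ (2 * n + 1)"
  proof (intro mult_left_mono power_mono)
    show "real D + 1 \<le> (real d + 1) * (real K + 1)" by (simp add: D_def algebra_simps)
  qed auto
  also have "\<dots> = C * (real K + 1) ^ (2*n+3) * (1 / R\<^sup>2) ^ K"
  proof -
    have "\<epsilon>\<^sup>2 = B\<^sup>2 * (real K + 1)\<^sup>2 * (1 / R\<^sup>2) ^ K"
      by (simp add: \<epsilon>_def power_divide power_mult_distrib power_mult[symmetric] mult.commute power_one_over)
    moreover have "(real K + 1) ^ (2*n+3) = (real K + 1)\<^sup>2 * (real K + 1) ^ (2*n+1)"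
    proof -
      have "2*n+3 = 2 + (2*n+1)" by simp
      then show ?thesis by (simp only: power_add)
    qed
    ultimately show ?thesis unfolding C_def power_mult_distrib by (simp only: mult_ac)
  qed
  also have "\<dots> < 1" by (rule K)
  finally show ?thesis using rb gc by (intro that)
qed

section \<open>Sums of squared moduli of polynomials\<close>

definition sos_family :: "nat \<Rightarrow> (nat \<Rightarrow> complex^'n::finite \<Rightarrow> complex) \<Rightarrow> (complex^'n \<Rightarrow> real) \<Rightarrow> bool" where
  "sos_family N h S \<longleftrightarrow> (\<forall>i<N. cpoly (h i)) \<and> (\<forall>z. (\<Sum>i<N. (cmod (h i z))\<^sup>2) = S z)"

lemma sos_family_single: "cpoly f \<Longrightarrow> sos_family 1 (\<lambda>_. f) (\<lambda>z. (cmod (f z))\<^sup>2)"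
  by (simp add: sos_family_def)

lemma sos_family_append:
  assumes "sos_family N1 h1 S1" "sos_family N2 h2 S2"
  shows "sos_family (N1 + N2) (\<lambda>i. if i < N1 then h1 i else h2 (i - N1)) (\<lambda>z. S1 z + S2 z)"
  unfolding sos_family_def
proof (intro conjI allI impI)
  fix i assume "i < N1 + N2"
  then show "cpoly (if i < N1 then h1 i else h2 (i - N1))" using assms by (auto simp: sos_family_def)
next
  fix z
  let ?h = "\<lambda>i. if i < N1 then h1 i else h2 (i - N1)"
  have "(\<Sum>i<N1 + N2. (cmod (?h i z))\<^sup>2) = (\<Sum>i\<in>{0..<N1 + N2}. (cmod (?h i z))\<^sup>2)"
    by (simp only: atLeast0LessThan)
  also have "\<dots> = (\<Sum>i\<in>{0..<N1}. (cmod (?h i z))\<^sup>2) + (\<Sum>i\<in>{N1..<N1 + N2}. (cmod (?h i z))\<^sup>2)"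
    by (rule sum.atLeastLessThan_concat[symmetric]) auto
  also have "(\<Sum>i\<in>{0..<N1}. (cmod (?h i z))\<^sup>2) = (\<Sum>i<N1. (cmod (h1 i z))\<^sup>2)"
    by (simp add: atLeast0LessThan)
  also have "(\<Sum>i\<in>{N1..<N1 + N2}. (cmod (?h i z))\<^sup>2) = (\<Sum>i\<in>{0..<N2}. (cmod (?h (i + N1) z))\<^sup>2)"
    using sum.shift_bounds_nat_ivl[of "\<lambda>i. (cmod (?h i z))\<^sup>2" 0 N1 N2] by (simp add: add.commute)
  also have "\<dots> = (\<Sum>i<N2. (cmod (h2 i z))\<^sup>2)" by (simp add: atLeast0LessThan)
  finally show "(\<Sum>i<N1 + N2. (cmod (?h i z))\<^sup>2) = S1 z + S2 z" using assms by (simp add: sos_family_def)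
qed

lemma sos_family_set:
  fixes F :: "'a \<Rightarrow> complex^'n::finite \<Rightarrow> complex"
  assumes "finite I" "\<forall>x\<in>I. cpoly (F x)"
  shows "\<exists>N h. sos_family N h (\<lambda>z. \<Sum>x\<in>I. (cmod (F x z))\<^sup>2)"
proof -
  obtain e where e: "bij_betw e {0..<card I} I" using ex_bij_betw_nat_finite[OF assms(1)] by blast
  have "sos_family (card I) (\<lambda>i. F (e i)) (\<lambda>z. \<Sum>x\<in>I. (cmod (F x z))\<^sup>2)"
    unfolding sos_family_def
  proof (intro conjI allI impI)
    fix i assume "i < card I"
    then have "e i \<in> I" using e by (auto simp: bij_betw_def)
    then show "cpoly (F (e i))" using assms by auto
  next
    fix z show "(\<Sum>i<card I. (cmod (F (e i) z))\<^sup>2) = (\<Sum>x\<in>I. (cmod (F x z))\<^sup>2)"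
      using sum.reindex_bij_betw[OF e, of "\<lambda>x. (cmod (F x z))\<^sup>2"] by (simp add: atLeast0LessThan)
  qed
  then show ?thesis by blast
qed

lemma sos_family_scale:
  assumes "sos_family N h S" "0 \<le> w"
  shows "sos_family N (\<lambda>i z. complex_of_real (sqrt w) * h i z) (\<lambda>z. w * S z)"
  unfolding sos_family_def
proof (intro conjI allI impI)
  fix i assume "i < N"
  then obtain D where "cpoly_deg_le D (h i)" using assms(1) cpoly_imp_deg_le by (auto simp: sos_family_def)
  then show "cpoly (\<lambda>z. complex_of_real (sqrt w) * h i z)" by (intro cpoly_deg_le_imp_cpoly[OF cpoly_deg_le_cmult])
next
  fix z show "(\<Sum>i<N. (cmod (complex_of_real (sqrt w) * h i z))\<^sup>2) = w * S z"
    using assms by (simp add: sos_family_def norm_mult power_mult_distrib sum_distrib_left[symmetric])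
qed

lemma sos_family_cong: "sos_family N h S \<Longrightarrow> (\<And>z. S z = T z) \<Longrightarrow> sos_family N h T"
  by (simp add: sos_family_def)

lemma exists_sos_family_lagrange_weights:
  fixes q g :: "complex^'n::finite \<Rightarrow> complex"
  assumes "cpoly q" "cpoly_deg_le D g" "0 \<le> w0" "0 \<le> w1" "0 \<le> w2" "0 \<le> w3"
  obtains N :: nat and h where
    "sos_family N h (\<lambda>z. w0 + w1 * ((cmod (s - g z / s))\<^sup>2 + (cmod (q z))\<^sup>2) + w2 * lagrange_defect D c z
       + w3 * (cmod (q z))\<^sup>2 * lagrange_defect K b z + (cmod (q z))\<^sup>2 * (norm z)\<^sup>2 / 2)"
    "h 0 = (\<lambda>z. complex_of_real (sqrt w0))" "0 < N"
proof -
  obtain d where dq: "cpoly_deg_le d q" using cpoly_imp_deg_le[OF assms(1)] by blast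
  have "cpoly_deg_le D (\<lambda>z. s - inverse s * g z)"
    by (intro cpoly_deg_le_diff cpoly_deg_le_const cpoly_deg_le_cmult assms(2))
  then have "cpoly (\<lambda>z. s - g z / s)" by (simp add: divide_inverse mult.commute cpoly_deg_le_imp_cpoly)
  note fam1 = sos_family_append[OF sos_family_single[OF this] sos_family_single[OF assms(1)]]
  have poly2: "\<forall>p\<in>indices_deg_le D \<times> indices_deg_le D. cpoly (lagrange_term c (fst p) (snd p))"
    by (auto intro!: cpoly_deg_le_imp_cpoly cpoly_deg_le_lagrange_term)
  obtain N2 h2 where fam2:
    "sos_family N2 h2 (\<lambda>z. \<Sum>p\<in>indices_deg_le D \<times> indices_deg_le D. (cmod (lagrange_term c (fst p) (snd p) z))\<^sup>2)"
    using sos_family_set[OF _ poly2] by auto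
  have poly3: "\<forall>p\<in>indices_deg_le K \<times> indices_deg_le K. cpoly (\<lambda>z. q z * lagrange_term b (fst p) (snd p) z)"
    by (auto intro!: cpoly_deg_le_imp_cpoly cpoly_deg_le_mult dq cpoly_deg_le_lagrange_term)
  obtain N3 h3 where fam3: "sos_family N3 h3
      (\<lambda>z. \<Sum>p\<in>indices_deg_le K \<times> indices_deg_le K. (cmod (q z * lagrange_term b (fst p) (snd p) z))\<^sup>2)"
    using sos_family_set[OF _ poly3] by auto
  have poly4: "\<forall>i\<in>UNIV. cpoly (\<lambda>z. q z * z $ i)"
    by (auto intro!: cpoly_deg_le_imp_cpoly cpoly_deg_le_mult dq cpoly_deg_le_coord)
  obtain N4 h4 where fam4: "sos_family N4 h4 (\<lambda>z. \<Sum>i\<in>UNIV. (cmod (q z * z $ i))\<^sup>2)"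
    using sos_family_set[OF _ poly4] by auto
  have "cpoly (\<lambda>z::complex^'n. 1)" by (rule cpoly_deg_le_imp_cpoly[OF cpoly_deg_le_const])
  from sos_family_append[OF sos_family_scale[OF sos_family_single[OF this] assms(3)]
      sos_family_append[OF sos_family_scale[OF fam1 assms(4)]
      sos_family_append[OF sos_family_scale[OF fam2, of "w2 / 2"]
      sos_family_append[OF sos_family_scale[OF fam3, of "w3 / 2"] sos_family_scale[OF fam4, of "1/2"]]]]]
  show ?thesis
  proof (rule that[OF sos_family_cong])
    show "w0 * (cmod 1)\<^sup>2 + (w1 * ((cmod (s - g z / s))\<^sup>2 + (cmod (q z))\<^sup>2)
        + (w2 / 2 * (\<Sum>p\<in>indices_deg_le D \<times> indices_deg_le D. (cmod (lagrange_term c (fst p) (snd p) z))\<^sup>2)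
        + (w3 / 2 * (\<Sum>p\<in>indices_deg_le K \<times> indices_deg_le K. (cmod (q z * lagrange_term b (fst p) (snd p) z))\<^sup>2)
        + 1/2 * (\<Sum>i\<in>UNIV. (cmod (q z * z $ i))\<^sup>2))))
      = w0 + w1 * ((cmod (s - g z / s))\<^sup>2 + (cmod (q z))\<^sup>2) + w2 * lagrange_defect D c z
        + w3 * (cmod (q z))\<^sup>2 * lagrange_defect K b z + (cmod (q z))\<^sup>2 * (norm z)\<^sup>2 / 2" for z
      by (simp add: lagrange_defect_def sum.cartesian_product split_def norm_mult power_mult_distrib
          sum_distrib_left sum_divide_distrib norm_vec_power2 mult.assoc)
  qed (use assms in auto)
qed

lemma cmod_one_minus_sq_split:
  assumes "\<rho> > 0"
  shows "(cmod (1 - w))\<^sup>2 = (cmod (complex_of_real (sqrt \<rho>) - w / complex_of_real (sqrt \<rho>)))\<^sup>2 + (1 - \<rho>) * (1 - (cmod w)\<^sup>2 / \<rho>)"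
proof -
  define s where "s = sqrt \<rho>"
  have s0: "s > 0" using assms by (simp add: s_def)
  have s2: "s\<^sup>2 = \<rho>" using assms by (simp add: s_def)
  have e1: "(cmod (complex_of_real s - w / complex_of_real s))\<^sup>2 = (s - Re w / s)\<^sup>2 + (Im w / s)\<^sup>2"
    unfolding cmod_power2 by (simp add: Re_divide_of_real Im_divide_of_real power2_eq_square)
  have e2: "(cmod (1 - w))\<^sup>2 = (1 - Re w)\<^sup>2 + (Im w)\<^sup>2" by (simp add: cmod_power2)
  have e3: "(cmod w)\<^sup>2 = (Re w)\<^sup>2 + (Im w)\<^sup>2" by (simp add: cmod_power2)
  show ?thesis unfolding s_def[symmetric] unfolding e1 e2 e3 unfolding s2[symmetric] using s0
    by (simp add: field_simps power2_eq_square)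
qed

text \<open>Here \<open>Rr\<close>, \<open>Gg\<close> stand for \<open>|r|^2\<close>, \<open>|g|^2\<close> with \<open>g = 1 - q r\<close>, \<open>Q\<close> for \<open>|q|^2\<close>, \<open>U\<close>, \<open>V\<close> for the Lagrange
defects of \<open>g\<close> and \<open>r\<close>, \<open>P\<close>, \<open>Pr\<close> for the power sums, and \<open>W\<close> for \<open>|\<surd>\<rho> - g/\<surd>\<rho>|^2\<close>.\<close>

lemma sos_defect_identity:
  fixes \<rho> A Ar P Pr Q Rr Gg U V W E F :: real
  assumes "\<rho> \<noteq> 0" "Rr + V = Ar * Pr" "Gg + U = A * P" "Q * Rr = W + (1 - \<rho>) * (1 - Gg / \<rho>)"
  shows "(1 - \<rho>) * (1 - A * E / \<rho>) + W + (1 - \<rho>) / \<rho> * U + Q + Q * V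
       = (Ar * F + 1) * Q - ((1 - \<rho>) / \<rho> * A * (E - P) + Q * Ar * (F - Pr))"
proof -
  have U: "U = A * P - Gg" and V: "V = Ar * Pr - Rr" and W: "W = Q * Rr - (1 - \<rho>) * (1 - Gg / \<rho>)"
    using assms(2-4) by simp_all
  show ?thesis unfolding U V W using assms(1) by (simp add: field_simps)
qed

lemma weighted_sum_sq_identity:
  fixes q r :: "complex^'n::finite \<Rightarrow> complex"
  assumes rb: "\<forall>z. r z = (\<Sum>\<alpha>\<in>indices_deg_le K. b \<alpha> * cmonomial \<alpha> z)"
    and gc: "\<forall>z. 1 - q z * r z = (\<Sum>\<alpha>\<in>indices_deg_le D. c \<alpha> * cmonomial \<alpha> z)"
    and "0 < \<rho>"
  defines "A \<equiv> coeff_mass D c" and "Ar \<equiv> coeff_mass K b" and "L \<equiv> coeff_mass K b * (real K + 1) + 1"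
    and "s \<equiv> complex_of_real (sqrt \<rho>)"
  shows "(1 - \<rho>) * (1 - A * (real D + 1) / \<rho>) / (2 * L)
      + 1 / (2 * L) * ((cmod (s - (1 - q z * r z) / s))\<^sup>2 + (cmod (q z))\<^sup>2)
      + (1 - \<rho>) / (2 * \<rho> * L) * lagrange_defect D c z + 1 / (2 * L) * (cmod (q z))\<^sup>2 * lagrange_defect K b z
      + (cmod (q z))\<^sup>2 * (norm z)\<^sup>2 / 2
    = (cmod (q z))\<^sup>2 * (1 + (norm z)\<^sup>2) / 2 - ((1 - \<rho>) / \<rho> * A * (real D + 1 - norm_power_sum D z)
      + (cmod (q z))\<^sup>2 * Ar * (real K + 1 - norm_power_sum K z)) / (2 * L)"
proof -
  define Q where "Q = (cmod (q z))\<^sup>2"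
  define W where "W = (cmod (s - (1 - q z * r z) / s))\<^sup>2"
  have L0: "L > 0" using coeff_mass_nonneg[of K b] by (simp add: L_def add_nonneg_pos)
  have "(cmod (r z))\<^sup>2 + lagrange_defect K b z = Ar * norm_power_sum K z"
    unfolding Ar_def by (rule cmod_sq_add_lagrange_defect[OF rb])
  moreover have "(cmod (1 - q z * r z))\<^sup>2 + lagrange_defect D c z = A * norm_power_sum D z"
    unfolding A_def by (rule cmod_sq_add_lagrange_defect[OF gc])
  moreover have "Q * (cmod (r z))\<^sup>2 = W + (1 - \<rho>) * (1 - (cmod (1 - q z * r z))\<^sup>2 / \<rho>)"
    using cmod_one_minus_sq_split[OF \<open>0 < \<rho>\<close>, of "1 - q z * r z"]
    by (simp add: Q_def W_def s_def norm_mult power_mult_distrib)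
  ultimately have identity: "(1 - \<rho>) * (1 - A * (real D + 1) / \<rho>) + W + (1 - \<rho>) / \<rho> * lagrange_defect D c z
      + Q + Q * lagrange_defect K b z = L * Q - ((1 - \<rho>) / \<rho> * A * (real D + 1 - norm_power_sum D z)
      + Q * Ar * (real K + 1 - norm_power_sum K z))"
    unfolding L_def Ar_def[symmetric] using \<open>0 < \<rho>\<close> by (intro sos_defect_identity) auto
  have "(1 - \<rho>) * (1 - A * (real D + 1) / \<rho>) / (2 * L) + 1 / (2 * L) * (W + Q)
      + (1 - \<rho>) / (2 * \<rho> * L) * lagrange_defect D c z + 1 / (2 * L) * Q * lagrange_defect K b z
      + Q * (norm z)\<^sup>2 / 2
    = ((1 - \<rho>) * (1 - A * (real D + 1) / \<rho>) + W + (1 - \<rho>) / \<rho> * lagrange_defect D c z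
      + Q + Q * lagrange_defect K b z) / (2 * L) + Q * (norm z)\<^sup>2 / 2"
    using L0 \<open>0 < \<rho>\<close> by (simp add: field_simps)
  also have "\<dots> = Q * (1 + (norm z)\<^sup>2) / 2 - ((1 - \<rho>) / \<rho> * A * (real D + 1 - norm_power_sum D z)
      + Q * Ar * (real K + 1 - norm_power_sum K z)) / (2 * L)"
    unfolding identity using L0 by (simp add: field_simps)
  finally show ?thesis by (simp add: Q_def W_def)
qed

lemma exists_sos_family_from_approx_inverse:
  fixes q r :: "complex^'n::finite \<Rightarrow> complex"
  assumes "cpoly q"
    and rb: "\<forall>z. r z = (\<Sum>\<alpha>\<in>indices_deg_le K. b \<alpha> * cmonomial \<alpha> z)"
    and gc: "\<forall>z. 1 - q z * r z = (\<Sum>\<alpha>\<in>indices_deg_le D. c \<alpha> * cmonomial \<alpha> z)"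
    and small: "coeff_mass D c * (real D + 1) < 1"
  obtains N :: nat and h a where "\<forall>i<N. cpoly (h i)" "0 < N" "h 0 = (\<lambda>z. a)" "a \<noteq> 0"
    "\<And>z. norm z \<le> 1 \<Longrightarrow> (\<Sum>i<N. (cmod (h i z))\<^sup>2) \<le> (cmod (q z))\<^sup>2 * (1 + (norm z)\<^sup>2) / 2"
    "\<And>z. norm z = 1 \<Longrightarrow> (\<Sum>i<N. (cmod (h i z))\<^sup>2) = (cmod (q z))\<^sup>2"
proof -
  define A where "A = coeff_mass D c"
  define Ar where "Ar = coeff_mass K b"
  define L where "L = Ar * (real K + 1) + 1"
  \<comment> \<open>Any \<open>\<rho>\<close> strictly between \<open>A (D + 1)\<close> and \<open>1\<close> makes the constant term \<open>\<kappa>\<close> positive.\<close>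
  define \<rho> where "\<rho> = (1 + A * (real D + 1)) / 2"
  define \<kappa> where "\<kappa> = (1 - \<rho>) * (1 - A * (real D + 1) / \<rho>)"
  have A0: "A \<ge> 0" and Ar0: "Ar \<ge> 0" by (simp_all add: A_def Ar_def coeff_mass_nonneg)
  then have L0: "L > 0" by (simp add: L_def add_nonneg_pos)
  have "0 \<le> A * (real D + 1)" "A * (real D + 1) < 1" using A0 small by (simp_all add: A_def)
  then have \<rho>: "0 < \<rho>" "\<rho> < 1" "A * (real D + 1) < \<rho>" by (simp_all add: \<rho>_def)
  then have \<kappa>0: "\<kappa> > 0" by (simp add: \<kappa>_def divide_less_eq)
  have w: "0 \<le> \<kappa> / (2 * L)" "0 \<le> 1 / (2 * L)" "0 \<le> (1 - \<rho>) / (2 * \<rho> * L)"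
    using \<kappa>0 L0 \<rho> by simp_all
  have "cpoly_deg_le D (\<lambda>z. 1 - q z * r z)" using gc by (auto simp: cpoly_deg_le_def)
  then obtain N :: nat and h where family: "sos_family N h (\<lambda>z. \<kappa> / (2 * L)
      + 1 / (2 * L) * ((cmod (complex_of_real (sqrt \<rho>) - (1 - q z * r z) / complex_of_real (sqrt \<rho>)))\<^sup>2
      + (cmod (q z))\<^sup>2) + (1 - \<rho>) / (2 * \<rho> * L) * lagrange_defect D c z
      + 1 / (2 * L) * (cmod (q z))\<^sup>2 * lagrange_defect K b z + (cmod (q z))\<^sup>2 * (norm z)\<^sup>2 / 2)"
    and h0: "h 0 = (\<lambda>z. complex_of_real (sqrt (\<kappa> / (2 * L))))" and "0 < N"
    by (rule exists_sos_family_lagrange_weights[OF assms(1) _ w(1) w(2) w(3) w(2)]) (rule that)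
  define \<Delta> where "\<Delta> z = (1 - \<rho>) / \<rho> * A * (real D + 1 - norm_power_sum D z)
      + (cmod (q z))\<^sup>2 * Ar * (real K + 1 - norm_power_sum K z)" for z
  have sum_eq: "(\<Sum>i<N. (cmod (h i z))\<^sup>2) = (cmod (q z))\<^sup>2 * (1 + (norm z)\<^sup>2) / 2 - \<Delta> z / (2 * L)" for z
    using family weighted_sum_sq_identity[OF rb gc \<rho>(1), of z]
    by (simp add: sos_family_def \<kappa>_def \<Delta>_def A_def Ar_def L_def)
  show ?thesis
  proof (rule that)
    show "\<forall>i<N. cpoly (h i)" using family by (simp add: sos_family_def)
    show "0 < N" "h 0 = (\<lambda>z. complex_of_real (sqrt (\<kappa> / (2 * L))))" by fact+
    show "complex_of_real (sqrt (\<kappa> / (2 * L))) \<noteq> 0" using \<kappa>0 L0 by simp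
    fix z :: "complex^'n"
    show "(\<Sum>i<N. (cmod (h i z))\<^sup>2) \<le> (cmod (q z))\<^sup>2 * (1 + (norm z)\<^sup>2) / 2" if "norm z \<le> 1"
    proof -
      have "\<Delta> z \<ge> 0"
        using norm_power_sum_le[OF that, of D] norm_power_sum_le[OF that, of K] \<rho> A0 Ar0
        by (simp add: \<Delta>_def)
      then show ?thesis using L0 by (simp add: sum_eq)
    qed
    show "(\<Sum>i<N. (cmod (h i z))\<^sup>2) = (cmod (q z))\<^sup>2" if "norm z = 1"
      using that by (simp add: sum_eq \<Delta>_def norm_power_sum_sphere)
  qed
qed

lemma exists_sos_family_for_denominator:
  fixes q :: "complex^'n::finite \<Rightarrow> complex"
  assumes "cpoly q" "\<forall>z\<in>cball 0 1. q z \<noteq> 0"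
  obtains N :: nat and h a where "\<forall>i<N. cpoly (h i)" "0 < N" "h 0 = (\<lambda>z. a)" "a \<noteq> 0"
    "\<And>z. norm z < 1 \<Longrightarrow> (\<Sum>i<N. (cmod (h i z))\<^sup>2) < (cmod (q z))\<^sup>2"
    "\<And>z. norm z = 1 \<Longrightarrow> (\<Sum>i<N. (cmod (h i z))\<^sup>2) = (cmod (q z))\<^sup>2"
proof -
  obtain K r b D c where r: "\<forall>z. r z = (\<Sum>\<alpha>\<in>indices_deg_le K. b \<alpha> * cmonomial \<alpha> z)"
    and g: "\<forall>z. 1 - q z * r z = (\<Sum>\<alpha>\<in>indices_deg_le D. c \<alpha> * cmonomial \<alpha> z)"
    and small: "coeff_mass D c * (real D + 1) < 1"
    by (rule exists_approx_inverse_small_mass[OF assms]) (rule that)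
  obtain N :: nat and h a where family: "\<forall>i<N. cpoly (h i)" "0 < N" "h 0 = (\<lambda>z. a)" "a \<noteq> 0"
    and inside: "\<And>z. norm z \<le> 1 \<Longrightarrow> (\<Sum>i<N. (cmod (h i z))\<^sup>2) \<le> (cmod (q z))\<^sup>2 * (1 + (norm z)\<^sup>2) / 2"
    and sphere: "\<And>z. norm z = 1 \<Longrightarrow> (\<Sum>i<N. (cmod (h i z))\<^sup>2) = (cmod (q z))\<^sup>2"
    by (rule exists_sos_family_from_approx_inverse[OF assms(1) r g small]) (rule that)
  have strict: "(\<Sum>i<N. (cmod (h i z))\<^sup>2) < (cmod (q z))\<^sup>2" if "norm z < 1" for z
  proof -
    have "(cmod (q z))\<^sup>2 * (norm z)\<^sup>2 < (cmod (q z))\<^sup>2 * 1"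
      using assms(2) that by (intro mult_strict_left_mono) (auto simp: power_less_one_iff)
    then show ?thesis using inside[of z] that by (simp add: field_simps)
  qed
  show ?thesis by (rule that[OF family strict sphere])
qed

theorem theorem6p1:
  fixes q :: "complex^'n \<Rightarrow> complex"
  assumes "cpoly q"
    and "\<forall>z\<in>cball 0 1. q z \<noteq> 0"
  shows "\<exists>(N::nat) (p :: nat \<Rightarrow> complex^'n \<Rightarrow> complex).
           (\<forall>i<N. cpoly (p i))
         \<and> (\<forall>i<N. holomorphic_Cn (\<lambda>z. p i z / q z) (ball 0 1))
         \<and> (\<forall>z\<in>ball 0 1. (\<lambda>i. if i < N then p i z / q z else 0) \<in> ballN N)
         \<and> proper_ball_map N (\<lambda>z i. if i < N then p i z / q z else 0)
         \<and> (\<forall>d. cpoly d \<and> cpoly_nonconstant d \<and> cpoly_dvd d q \<and> (\<forall>i<N. cpoly_dvd d (p i))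
                \<longrightarrow> False)"
proof -
  obtain N :: nat and h a where h: "\<forall>i<N. cpoly (h i)" and "0 < N" "h 0 = (\<lambda>z. a)" "a \<noteq> 0"
    and inside: "\<And>z. norm z < 1 \<Longrightarrow> (\<Sum>i<N. (cmod (h i z))\<^sup>2) < (cmod (q z))\<^sup>2"
    and sphere: "\<And>z. norm z = 1 \<Longrightarrow> (\<Sum>i<N. (cmod (h i z))\<^sup>2) = (cmod (q z))\<^sup>2"
    by (rule exists_sos_family_for_denominator[OF assms]) (rule that)
  have "continuous_on (cball 0 1) (\<lambda>z i. if i < N then h i z / q z else 0)"
  proof (intro continuous_on_coordinatewise_then_product)
    show "continuous_on (cball 0 1) (\<lambda>z. if i < N then h i z / q z else 0)" for i
      using h assms by (cases "i < N") (auto intro!: holomorphic_Cn_imp_continuous_on holomorphic_Cn_divide)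
  qed
  moreover have "\<not> cpoly_nonconstant d" if "cpoly d" "cpoly_dvd d (h 0)" for d
    using cpoly_dvd_nonzero_const_imp_constant that \<open>h 0 = (\<lambda>z. a)\<close> \<open>a \<noteq> 0\<close> by metis
  ultimately show ?thesis using h assms \<open>0 < N\<close>
    by (intro exI[of _ N] exI[of _ h] conjI allI impI ballI sum_sq_divide_in_ballN inside
        proper_ball_mapI holomorphic_Cn_divide sum_sq_divide_notin_ballN sphere)
       auto
qed

end
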